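(* Let $\Sigma$ be a surface isometrically immersed into a geodesic ball $B_R\subset\mathbb{R}^3$ of radius $R$. Suppose that $\Sigma$ has at least one end which is an end of revolution in $\mathbb{R}^3$. Then its mean curvature vector field $\vec H$ satisfies $\sup_{x\in\Sigma}\|\vec H(x)\|\ge\frac{1}{R}$.
   Context: An end of revolution in $\mathbb{R}^3$ is the image of $(t,\theta)\mapsto R_\theta(\beta(t))$, where $\beta:[0,\infty)\to P$ is a smooth regular curve of infinite length in a plane $P$ containing a line $\ell$, $\beta$ does not meet $\ell$, and $R_\theta$ ranges over the rotations of $\mathbb{R}^3$ about $\ell$. *)

theory Defs
  imports "HOL-Analysis.Analysis"
begin

definition partial1 :: "(real \<times> real \<Rightarrow> 'b::real_normed_vector) \<Rightarrow> real \<times> real \<Rightarrow> 'b" where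
  "partial1 g = (\<lambda>(s,t). vector_derivative (\<lambda>s'. g (s',t)) (at s))"

definition partial2 :: "(real \<times> real \<Rightarrow> 'b::real_normed_vector) \<Rightarrow> real \<times> real \<Rightarrow> 'b" where
  "partial2 g = (\<lambda>(s,t). vector_derivative (\<lambda>t'. g (s,t')) (at t))"

inductive_set iter_partials :: "(real \<times> real \<Rightarrow> 'b::real_normed_vector) \<Rightarrow> (real \<times> real \<Rightarrow> 'b) set"
  for f where
  base: "f \<in> iter_partials f"
| d1: "g \<in> iter_partials f \<Longrightarrow> partial1 g \<in> iter_partials f"
| d2: "g \<in> iter_partials f \<Longrightarrow> partial2 g \<in> iter_partials f"

definition smooth2_on :: "(real \<times> real) set \<Rightarrow> (real \<times> real \<Rightarrow> 'b::real_normed_vector) \<Rightarrow> bool" where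
  "smooth2_on U f \<longleftrightarrow> open U \<and>
     (\<forall>g \<in> iter_partials f. continuous_on U g \<and>
        (\<forall>s t. (s,t) \<in> U \<longrightarrow>
            (\<lambda>s'. g (s',t)) differentiable (at s) \<and> (\<lambda>t'. g (s,t')) differentiable (at t)))"

inductive_set curve_derivs :: "real set \<Rightarrow> (real \<Rightarrow> 'b::real_normed_vector) \<Rightarrow> (real \<Rightarrow> 'b) set"
  for S f where
  base: "f \<in> curve_derivs S f"
| step: "g \<in> curve_derivs S f \<Longrightarrow> (\<lambda>t. vector_derivative g (at t within S)) \<in> curve_derivs S f"

definition smooth_curve_on :: "real set \<Rightarrow> (real \<Rightarrow> 'b::real_normed_vector) \<Rightarrow> bool" where
  "smooth_curve_on S f \<longleftrightarrow> (\<forall>g \<in> curve_derivs S f. \<forall>t\<in>S. g differentiable (at t within S))"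

definition compatible_params ::
  "(real \<times> real) set \<times> (real \<times> real \<Rightarrow> 'a) \<Rightarrow> (real \<times> real) set \<times> (real \<times> real \<Rightarrow> 'a) \<Rightarrow> bool" where
  "compatible_params P Q \<longleftrightarrow>
     (let U = fst P; p = snd P; V = fst Q; q = snd Q;
          W = {u \<in> U. p u \<in> q ` V}
      in open W \<and> smooth2_on W (inv_into V q \<circ> p))"

definition surface_atlas :: "'a set \<Rightarrow> ((real \<times> real) set \<times> (real \<times> real \<Rightarrow> 'a)) set \<Rightarrow> bool" where
  "surface_atlas M A \<longleftrightarrow>
     (\<forall>(U,p) \<in> A. open U \<and> inj_on p U \<and> p ` U \<subseteq> M) \<and>
     M = (\<Union>(U,p) \<in> A. p ` U) \<and>
     (\<forall>P \<in> A. \<forall>Q \<in> A. compatible_params P Q)"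

definition surf_top :: "'a set \<Rightarrow> ((real \<times> real) set \<times> (real \<times> real \<Rightarrow> 'a)) set \<Rightarrow> 'a topology" where
  "surf_top M A = topology (\<lambda>S. S \<subseteq> M \<and> (\<forall>(U,p) \<in> A. open {u \<in> U. p u \<in> S}))"

definition immersion_on :: "(real \<times> real) set \<Rightarrow> (real \<times> real \<Rightarrow> real^3) \<Rightarrow> bool" where
  "immersion_on U X \<longleftrightarrow> smooth2_on U X \<and>
     (\<forall>u \<in> U. cross3 (partial1 X u) (partial2 X u) \<noteq> 0)"

text \<open>Mean curvature vector (normalised: H = ((k1 + k2)/2) N) of a parametrized surface
  with the induced (pull-back) metric, via the first and second fundamental forms.\<close>
definition mean_curv_vec :: "(real \<times> real \<Rightarrow> real^3) \<Rightarrow> real \<times> real \<Rightarrow> real^3" where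
  "mean_curv_vec X u =
     (let Xs = partial1 X u; Xt = partial2 X u;
          Xss = partial1 (partial1 X) u; Xst = partial2 (partial1 X) u;
          Xtt = partial2 (partial2 X) u;
          E = Xs \<bullet> Xs; F = Xs \<bullet> Xt; G = Xt \<bullet> Xt;
          N = (1 / norm (cross3 Xs Xt)) *\<^sub>R cross3 Xs Xt;
          L = Xss \<bullet> N; M = Xst \<bullet> N; NN = Xtt \<bullet> N
      in ((E * NN - 2 * F * M + G * L) / (2 * (E * G - F\<^sup>2))) *\<^sub>R N)"

text \<open>F : M \<rightarrow> R^3 is an immersion of the surface (M, A); it is isometric for the induced metric.\<close>
definition surface_immersion :: "'a set \<Rightarrow> ((real \<times> real) set \<times> (real \<times> real \<Rightarrow> 'a)) set \<Rightarrow> ('a \<Rightarrow> real^3) \<Rightarrow> bool" where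
  "surface_immersion M A F \<longleftrightarrow> surface_atlas M A \<and> (\<forall>(U,p) \<in> A. immersion_on U (F \<circ> p))"

definition rot_about :: "real^3 \<Rightarrow> real^3 \<Rightarrow> real \<Rightarrow> real^3 \<Rightarrow> real^3" where
  "rot_about a v \<theta> x =
     a + ((x - a) \<bullet> v) *\<^sub>R v + cos \<theta> *\<^sub>R ((x - a) - ((x - a) \<bullet> v) *\<^sub>R v)
       + sin \<theta> *\<^sub>R cross3 v (x - a)"

definition revolution_end_data :: "real^3 \<Rightarrow> real^3 \<Rightarrow> real^3 \<Rightarrow> (real \<Rightarrow> real^3) \<Rightarrow> bool" where
  "revolution_end_data a v n \<beta> \<longleftrightarrow>
     norm v = 1 \<and> norm n = 1 \<and> v \<bullet> n = 0 \<and>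
     (\<forall>t \<ge> 0. (\<beta> t - a) \<bullet> n = 0) \<and>
     (\<forall>t \<ge> 0. \<forall>s. \<beta> t \<noteq> a + s *\<^sub>R v) \<and>
     smooth_curve_on {0..} \<beta> \<and>
     (\<forall>t \<ge> 0. vector_derivative \<beta> (at t within {0..}) \<noteq> 0) \<and>
     (\<forall>B. \<exists>T \<ge> 0. integral {0..T} (\<lambda>t. norm (vector_derivative \<beta> (at t within {0..}))) > B)"

definition revolution_map :: "real^3 \<Rightarrow> real^3 \<Rightarrow> (real \<Rightarrow> real^3) \<Rightarrow> real \<times> real \<Rightarrow> real^3" where
  "revolution_map a v \<beta> = (\<lambda>(t,\<theta>). rot_about a v \<theta> (\<beta> t))"

text \<open>The immersed surface (M, A, F) has an end which is an end of revolution: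
  there is a map p from [0,\<infinity>) \<times> R (2\<pi>-periodic in \<theta>, injective modulo 2\<pi>, i.e. from
  [0,\<infinity>) \<times> S^1) into M, continuous for the manifold topology, whose restrictions to the
  open part t > 0 are local parametrizations compatible with the atlas, such that
  p({t > 0}) is a connected component of M - K for some compact K containing the boundary
  circle p({0} \<times> R) (so the end lies at t \<rightarrow> \<infinity>), and F \<circ> p = R_\<theta>(\<beta>(t)).\<close>
definition has_revolution_end ::
  "'a set \<Rightarrow> ((real \<times> real) set \<times> (real \<times> real \<Rightarrow> 'a)) set \<Rightarrow> ('a \<Rightarrow> real^3) \<Rightarrow> bool" where
  "has_revolution_end M A F \<longleftrightarrow>
     (\<exists>a v n \<beta> (p :: real \<times> real \<Rightarrow> 'a) K.
        revolution_end_data a v n \<beta> \<and>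
        continuous_map (top_of_set {z. fst z \<ge> 0}) (surf_top M A) p \<and>
        (\<forall>t \<theta>. p (t, \<theta> + 2 * pi) = p (t, \<theta>)) \<and>
        inj_on p {z. fst z \<ge> 0 \<and> 0 \<le> snd z \<and> snd z < 2 * pi} \<and>
        (\<forall>V. open V \<and> V \<subseteq> {z. fst z > 0} \<and> inj_on p V \<longrightarrow>
             (\<forall>P \<in> A. compatible_params (V, p) P \<and> compatible_params P (V, p))) \<and>
        compactin (surf_top M A) K \<and>
        p ` {z. fst z = 0} \<subseteq> K \<and>
        p ` {z. fst z > 0} \<in> connected_components_of (subtopology (surf_top M A) (M - K)) \<and>
        (\<forall>z. fst z \<ge> 0 \<longrightarrow> F (p z) = revolution_map a v \<beta> z))"

end

theory Submission
  imports Defs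
begin

text \<open>
  Place the profile curve of the end in a half-plane bounded by the axis, with coordinates
  \<open>(x, y)\<close>, \<open>y > 0\<close>, and \<open>x\<close> measured from the projection of the centre of the ball onto
  the axis; since the circle swept by each profile point lies in the ball, \<open>x\<^sup>2 + y\<^sup>2 \<le> R\<^sup>2\<close>.
  If \<open>\<parallel>H\<parallel> \<le> h\<close> with \<open>hR < 1\<close>, let \<open>\<mu> = (1 - hR)/(1 + h)\<close>.  Then
  \<open>Z = y \<cdot> d/ds (x\<^sup>2 + y\<^sup>2 + \<mu> y)\<close> (\<open>s\<close> the arclength) satisfies \<open>dZ/ds \<ge> \<mu>\<close> along the end,
  whereas \<open>\<bar>Z\<bar> \<le> R(2R + \<mu>)\<close>; so the end would have finite length.  In the charts of the atlas
  the mean curvature can be computed in the revolution parametrisation, since its norm does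
  not depend on the parametrisation.
\<close>

section \<open>The mean curvature vector in terms of partial derivatives\<close>

definition mean_curv_of_partials :: "real^3 \<Rightarrow> real^3 \<Rightarrow> real^3 \<Rightarrow> real^3 \<Rightarrow> real^3 \<Rightarrow> real^3" where
  "mean_curv_of_partials Xs Xt Xss Xst Xtt =
     (let E = Xs \<bullet> Xs; F = Xs \<bullet> Xt; G = Xt \<bullet> Xt;
          N = (1 / norm (cross3 Xs Xt)) *\<^sub>R cross3 Xs Xt;
          L = Xss \<bullet> N; M = Xst \<bullet> N; NN = Xtt \<bullet> N
      in ((E * NN - 2 * F * M + G * L) / (2 * (E * G - F\<^sup>2))) *\<^sub>R N)"

lemma mean_curv_vec_eq_of_partials:
  "mean_curv_vec X u = mean_curv_of_partials (partial1 X u) (partial2 X u)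
     (partial1 (partial1 X) u) (partial2 (partial1 X) u) (partial2 (partial2 X) u)"
  unfolding mean_curv_vec_def mean_curv_of_partials_def Let_def ..

lemma norm_mean_curv_of_partials:
  "norm (mean_curv_of_partials A B Xss Xst Xtt) =
     \<bar>(A \<bullet> A) * (Xtt \<bullet> cross3 A B) - 2 * (A \<bullet> B) * (Xst \<bullet> cross3 A B) + (B \<bullet> B) * (Xss \<bullet> cross3 A B)\<bar>
      / (2 * \<bar>(A \<bullet> A) * (B \<bullet> B) - (A \<bullet> B)\<^sup>2\<bar> * norm (cross3 A B))"
proof (cases "cross3 A B = 0")
  case True
  then show ?thesis by (simp add: mean_curv_of_partials_def Let_def)
next
  case False
  define c where "c = cross3 A B"
  have nc: "norm c > 0" using False c_def by simp
  define Q where "Q = (A \<bullet> A) * (Xtt \<bullet> c) - 2 * (A \<bullet> B) * (Xst \<bullet> c) + (B \<bullet> B) * (Xss \<bullet> c)"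
  define D where "D = (A \<bullet> A) * (B \<bullet> B) - (A \<bullet> B)\<^sup>2"
  have "mean_curv_of_partials A B Xss Xst Xtt = (Q / norm c / (2 * D)) *\<^sub>R ((1 / norm c) *\<^sub>R c)"
    unfolding mean_curv_of_partials_def Let_def c_def[symmetric] Q_def D_def
    by (simp add: inner_scaleR_right algebra_simps add_divide_distrib diff_divide_distrib)
  also have "norm \<dots> = \<bar>Q\<bar> / (2 * \<bar>D\<bar> * norm c)"
    using nc by (simp add: abs_divide abs_mult field_simps)
  finally show ?thesis unfolding Q_def D_def c_def .
qed

lemma cross3_lincomb:
  "cross3 (a1 *\<^sub>R A + b1 *\<^sub>R B) (a2 *\<^sub>R A + b2 *\<^sub>R B) = (a1 * b2 - b1 * a2) *\<^sub>R cross3 A B"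
  by (simp add: cross_add_left cross_add_right cross_mult_left cross_mult_right algebra_simps
      cross_skew[of B A])

text \<open>
  The arguments on the left are the partial derivatives of \<open>X \<circ> \<phi>\<close> by the chain rule, for a
  reparametrisation \<open>\<phi>\<close> with Jacobian \<open>((a1, b1), (a2, b2))\<close>; the tangential terms
  \<open>p\<^sub>i A + q\<^sub>i B\<close> coming from the second derivatives of \<open>\<phi>\<close> are annihilated by the normal.
\<close>
lemma norm_mean_curv_of_partials_reparam:
  fixes A B Aa Ab Ba Bb :: "real^3"
  assumes sym: "Ab \<bullet> cross3 A B = Ba \<bullet> cross3 A B" and det: "a1 * b2 - b1 * a2 \<noteq> 0"
  shows "norm (mean_curv_of_partials (a1 *\<^sub>R A + b1 *\<^sub>R B) (a2 *\<^sub>R A + b2 *\<^sub>R B)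
      (p1 *\<^sub>R A + q1 *\<^sub>R B + a1 *\<^sub>R (a1 *\<^sub>R Aa + b1 *\<^sub>R Ab) + b1 *\<^sub>R (a1 *\<^sub>R Ba + b1 *\<^sub>R Bb))
      (p2 *\<^sub>R A + q2 *\<^sub>R B + a1 *\<^sub>R (a2 *\<^sub>R Aa + b2 *\<^sub>R Ab) + b1 *\<^sub>R (a2 *\<^sub>R Ba + b2 *\<^sub>R Bb))
      (p3 *\<^sub>R A + q3 *\<^sub>R B + a2 *\<^sub>R (a2 *\<^sub>R Aa + b2 *\<^sub>R Ab) + b2 *\<^sub>R (a2 *\<^sub>R Ba + b2 *\<^sub>R Bb)))
    = norm (mean_curv_of_partials A B Aa Ab Bb)"
proof -
  define c where "c = cross3 A B"
  define d where "d = a1 * b2 - b1 * a2"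
  define E where "E = A \<bullet> A"
  define F where "F = A \<bullet> B"
  define G where "G = B \<bullet> B"
  define l where "l = Aa \<bullet> c"
  define m where "m = Ab \<bullet> c"
  define n where "n = Bb \<bullet> c"
  define E' where "E' = a1\<^sup>2 * E + 2 * a1 * b1 * F + b1\<^sup>2 * G"
  define F' where "F' = a1 * a2 * E + (a1 * b2 + b1 * a2) * F + b1 * b2 * G"
  define G' where "G' = a2\<^sup>2 * E + 2 * a2 * b2 * F + b2\<^sup>2 * G"
  define l' where "l' = a1\<^sup>2 * l + 2 * a1 * b1 * m + b1\<^sup>2 * n"
  define m' where "m' = a1 * a2 * l + (a1 * b2 + b1 * a2) * m + b1 * b2 * n"
  define n' where "n' = a2\<^sup>2 * l + 2 * a2 * b2 * m + b2\<^sup>2 * n"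
  have "A \<bullet> c = 0" "B \<bullet> c = 0" "Ba \<bullet> c = m" "B \<bullet> A = F"
    using sym by (simp_all add: c_def m_def F_def dot_cross_self inner_commute)
  then have "norm (mean_curv_of_partials (a1 *\<^sub>R A + b1 *\<^sub>R B) (a2 *\<^sub>R A + b2 *\<^sub>R B)
      (p1 *\<^sub>R A + q1 *\<^sub>R B + a1 *\<^sub>R (a1 *\<^sub>R Aa + b1 *\<^sub>R Ab) + b1 *\<^sub>R (a1 *\<^sub>R Ba + b1 *\<^sub>R Bb))
      (p2 *\<^sub>R A + q2 *\<^sub>R B + a1 *\<^sub>R (a2 *\<^sub>R Aa + b2 *\<^sub>R Ab) + b1 *\<^sub>R (a2 *\<^sub>R Ba + b2 *\<^sub>R Bb))
      (p3 *\<^sub>R A + q3 *\<^sub>R B + a2 *\<^sub>R (a2 *\<^sub>R Aa + b2 *\<^sub>R Ab) + b2 *\<^sub>R (a2 *\<^sub>R Ba + b2 *\<^sub>R Bb)))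
    = \<bar>E' * (d * n') - 2 * F' * (d * m') + G' * (d * l')\<bar> / (2 * \<bar>E' * G' - F'\<^sup>2\<bar> * (\<bar>d\<bar> * norm c))"
    unfolding norm_mean_curv_of_partials cross3_lincomb d_def[symmetric] c_def[symmetric]
    by (simp add: inner_add_left inner_add_right E_def[symmetric] F_def[symmetric] G_def[symmetric]
        l_def[symmetric] m_def[symmetric] n_def[symmetric] E'_def F'_def G'_def l'_def m'_def n'_def
        algebra_simps power2_eq_square)
  also have "E' * (d * n') - 2 * F' * (d * m') + G' * (d * l') = d ^ 3 * (E * n - 2 * F * m + G * l)"
    unfolding E'_def F'_def G'_def l'_def m'_def n'_def d_def
    by (simp add: algebra_simps power2_eq_square power3_eq_cube)
  also have "E' * G' - F'\<^sup>2 = d\<^sup>2 * (E * G - F\<^sup>2)"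
    unfolding E'_def F'_def G'_def d_def by (simp add: algebra_simps power2_eq_square)
  also have "\<bar>d ^ 3 * (E * n - 2 * F * m + G * l)\<bar> / (2 * \<bar>d\<^sup>2 * (E * G - F\<^sup>2)\<bar> * (\<bar>d\<bar> * norm c))
      = \<bar>E * n - 2 * F * m + G * l\<bar> / (2 * \<bar>E * G - F\<^sup>2\<bar> * norm c)"
  proof -
    have cancel: "e ^ 3 * N / (2 * (e\<^sup>2 * D) * (e * C)) = N / (2 * D * C)" if "e \<noteq> 0" for e N D C :: real
    proof -
      have "2 * (e\<^sup>2 * D) * (e * C) = e ^ 3 * (2 * D * C)"
        by (simp add: power3_eq_cube power2_eq_square algebra_simps)
      then show ?thesis by (metis nonzero_mult_divide_mult_cancel_left power_not_zero that)
    qed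
    have "\<bar>d\<bar> \<noteq> 0" using det by (simp add: d_def)
    then show ?thesis unfolding abs_mult power_abs by (rule cancel)
  qed
  finally show ?thesis
    unfolding norm_mean_curv_of_partials E_def F_def G_def l_def m_def n_def c_def .
qed


section \<open>Partial derivatives of compositions\<close>

lemma eventually_nhds_slice1:
  fixes s t :: real
  assumes "open W" "(s, t) \<in> W"
  shows "eventually (\<lambda>s'. (s', t) \<in> W) (nhds s)"
proof -
  obtain e where e: "e > 0" "ball (s, t) e \<subseteq> W" using assms open_contains_ball by blast
  have "eventually (\<lambda>s'. dist s' s < e) (nhds s)" using e(1) eventually_nhds_metric by blast
  then show ?thesis
    by eventually_elim (use e in \<open>auto simp: dist_Pair_Pair dist_commute subset_iff\<close>)
qed

lemma eventually_nhds_slice2: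
  fixes s t :: real
  assumes "open W" "(s, t) \<in> W"
  shows "eventually (\<lambda>t'. (s, t') \<in> W) (nhds t)"
proof -
  obtain e where e: "e > 0" "ball (s, t) e \<subseteq> W" using assms open_contains_ball by blast
  have "eventually (\<lambda>t'. dist t' t < e) (nhds t)" using e(1) eventually_nhds_metric by blast
  then show ?thesis
    by eventually_elim (use e in \<open>auto simp: dist_Pair_Pair dist_commute subset_iff\<close>)
qed

lemma partial1_cong:
  assumes "open W" "\<And>z. z \<in> W \<Longrightarrow> f z = g z" "z \<in> W"
  shows "partial1 f z = partial1 g z"
proof -
  obtain s t where z: "z = (s, t)" by fastforce
  have "vector_derivative (\<lambda>s'. f (s', t)) (at s) = vector_derivative (\<lambda>s'. g (s', t)) (at s)"
    by (rule vector_derivative_cong_eq)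
       (use eventually_nhds_slice1[OF assms(1), of s t] assms z in \<open>auto elim: eventually_mono\<close>)
  then show ?thesis unfolding partial1_def z by simp
qed

lemma partial2_cong:
  assumes "open W" "\<And>z. z \<in> W \<Longrightarrow> f z = g z" "z \<in> W"
  shows "partial2 f z = partial2 g z"
proof -
  obtain s t where z: "z = (s, t)" by fastforce
  have "vector_derivative (\<lambda>t'. f (s, t')) (at t) = vector_derivative (\<lambda>t'. g (s, t')) (at t)"
    by (rule vector_derivative_cong_eq)
       (use eventually_nhds_slice2[OF assms(1), of s t] assms z in \<open>auto elim: eventually_mono\<close>)
  then show ?thesis unfolding partial2_def z by simp
qed

lemma mean_curv_vec_cong:
  assumes W: "open W" and eq: "\<And>z. z \<in> W \<Longrightarrow> X z = Y z" and u: "u \<in> W"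
  shows "mean_curv_vec X u = mean_curv_vec Y u"
proof -
  have p1: "partial1 X z = partial1 Y z" if "z \<in> W" for z
    using W eq that by (rule partial1_cong)
  have p2: "partial2 X z = partial2 Y z" if "z \<in> W" for z
    using W eq that by (rule partial2_cong)
  show ?thesis
    unfolding mean_curv_vec_eq_of_partials using p1[OF u] p2[OF u]
      partial1_cong[OF W p1 u] partial2_cong[OF W p1 u] partial2_cong[OF W p2 u] by simp
qed

lemma smooth2_on_has_partial1:
  assumes "smooth2_on W f" "g \<in> iter_partials f" "(s, t) \<in> W"
  shows "((\<lambda>s'. g (s', t)) has_vector_derivative partial1 g (s, t)) (at s)"
  using assms unfolding smooth2_on_def partial1_def by (auto simp: vector_derivative_works[symmetric])

lemma smooth2_on_has_partial2:
  assumes "smooth2_on W f" "g \<in> iter_partials f" "(s, t) \<in> W"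
  shows "((\<lambda>t'. g (s, t')) has_vector_derivative partial2 g (s, t)) (at t)"
  using assms unfolding smooth2_on_def partial2_def by (auto simp: vector_derivative_works[symmetric])

lemma has_vector_derivative_comp_pair:
  fixes G :: "real \<times> real \<Rightarrow> 'b::real_normed_vector"
  assumes "(\<gamma> has_vector_derivative \<gamma>') (at r)"
    and "(G has_derivative (\<lambda>h. fst h *\<^sub>R Ga + snd h *\<^sub>R Gb)) (at (\<gamma> r))"
  shows "((\<lambda>r. G (\<gamma> r)) has_vector_derivative (fst \<gamma>' *\<^sub>R Ga + snd \<gamma>' *\<^sub>R Gb)) (at r)"
proof -
  have "((G \<circ> \<gamma>) has_derivative ((\<lambda>h. fst h *\<^sub>R Ga + snd h *\<^sub>R Gb) \<circ> (\<lambda>x. x *\<^sub>R \<gamma>'))) (at r)"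
    using assms by (intro diff_chain_at) (auto simp: has_vector_derivative_def)
  moreover have "(\<lambda>h. fst h *\<^sub>R Ga + snd h *\<^sub>R Gb) \<circ> (\<lambda>x. x *\<^sub>R \<gamma>') =
      (\<lambda>x. x *\<^sub>R (fst \<gamma>' *\<^sub>R Ga + snd \<gamma>' *\<^sub>R Gb))"
    by (auto simp: fun_eq_iff algebra_simps)
  ultimately show ?thesis by (simp add: has_vector_derivative_def o_def)
qed

lemma has_vector_derivative_lincomb_comp:
  fixes A B :: "real \<times> real \<Rightarrow> 'b::real_normed_vector" and \<kappa> :: "real \<Rightarrow> real \<times> real"
  assumes \<gamma>: "(\<gamma> has_vector_derivative \<gamma>') (at r)"
    and \<kappa>: "(\<kappa> has_vector_derivative \<kappa>') (at r)"
    and DA: "(A has_derivative (\<lambda>h. fst h *\<^sub>R Aa + snd h *\<^sub>R Ab)) (at (\<gamma> r))"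
    and DB: "(B has_derivative (\<lambda>h. fst h *\<^sub>R Ba + snd h *\<^sub>R Bb)) (at (\<gamma> r))"
  shows "((\<lambda>r. fst (\<kappa> r) *\<^sub>R A (\<gamma> r) + snd (\<kappa> r) *\<^sub>R B (\<gamma> r)) has_vector_derivative
    (fst \<kappa>' *\<^sub>R A (\<gamma> r) + snd \<kappa>' *\<^sub>R B (\<gamma> r) + fst (\<kappa> r) *\<^sub>R (fst \<gamma>' *\<^sub>R Aa + snd \<gamma>' *\<^sub>R Ab)
      + snd (\<kappa> r) *\<^sub>R (fst \<gamma>' *\<^sub>R Ba + snd \<gamma>' *\<^sub>R Bb))) (at r)"
proof -
  have fst: "((\<lambda>r. fst (\<kappa> r)) has_real_derivative fst \<kappa>') (at r)"
    and snd: "((\<lambda>r. snd (\<kappa> r)) has_real_derivative snd \<kappa>') (at r)"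
    unfolding has_real_derivative_iff_has_vector_derivative
    by (rule bounded_linear.has_vector_derivative[OF bounded_linear_fst \<kappa>]
        bounded_linear.has_vector_derivative[OF bounded_linear_snd \<kappa>])+
  from has_vector_derivative_add
      [OF has_vector_derivative_scaleR[OF fst has_vector_derivative_comp_pair[OF \<gamma> DA]]
          has_vector_derivative_scaleR[OF snd has_vector_derivative_comp_pair[OF \<gamma> DB]]]
  show ?thesis by (simp add: algebra_simps)
qed

context
  fixes \<phi> :: "real \<times> real \<Rightarrow> real \<times> real" and W :: "(real \<times> real) set" and P :: "real \<times> real \<Rightarrow> bool"
    and X Xa Xb :: "real \<times> real \<Rightarrow> 'b::real_normed_vector"
  assumes smooth: "smooth2_on W \<phi>" and maps: "\<And>u. u \<in> W \<Longrightarrow> P (\<phi> u)"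
begin

lemma first_partials_comp:
  assumes DX: "\<And>z. P z \<Longrightarrow> (X has_derivative (\<lambda>h. fst h *\<^sub>R Xa z + snd h *\<^sub>R Xb z)) (at z)"
    and u: "u \<in> W"
  shows "partial1 (X \<circ> \<phi>) u = fst (partial1 \<phi> u) *\<^sub>R Xa (\<phi> u) + snd (partial1 \<phi> u) *\<^sub>R Xb (\<phi> u)"
    and "partial2 (X \<circ> \<phi>) u = fst (partial2 \<phi> u) *\<^sub>R Xa (\<phi> u) + snd (partial2 \<phi> u) *\<^sub>R Xb (\<phi> u)"
proof -
  obtain s t where st: "u = (s, t)" by fastforce
  have uW: "(s, t) \<in> W" using u st by simp
  have DXu: "(X has_derivative (\<lambda>h. fst h *\<^sub>R Xa (\<phi> (s, t)) + snd h *\<^sub>R Xb (\<phi> (s, t)))) (at (\<phi> (s, t)))"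
    using DX maps uW by blast
  from has_vector_derivative_comp_pair[OF smooth2_on_has_partial1[OF smooth iter_partials.base uW] DXu]
  show "partial1 (X \<circ> \<phi>) u = fst (partial1 \<phi> u) *\<^sub>R Xa (\<phi> u) + snd (partial1 \<phi> u) *\<^sub>R Xb (\<phi> u)"
    unfolding partial1_def st by (simp add: vector_derivative_at o_def)
  from has_vector_derivative_comp_pair[OF smooth2_on_has_partial2[OF smooth iter_partials.base uW] DXu]
  show "partial2 (X \<circ> \<phi>) u = fst (partial2 \<phi> u) *\<^sub>R Xa (\<phi> u) + snd (partial2 \<phi> u) *\<^sub>R Xb (\<phi> u)"
    unfolding partial2_def st by (simp add: vector_derivative_at o_def)
qed

lemma partials_lincomb_comp:
  assumes g: "g \<in> iter_partials \<phi>" and u: "u \<in> W"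
    and DA: "(Xa has_derivative (\<lambda>h. fst h *\<^sub>R Aa + snd h *\<^sub>R Ab)) (at (\<phi> u))"
    and DB: "(Xb has_derivative (\<lambda>h. fst h *\<^sub>R Ba + snd h *\<^sub>R Bb)) (at (\<phi> u))"
  shows "partial1 (\<lambda>z. fst (g z) *\<^sub>R Xa (\<phi> z) + snd (g z) *\<^sub>R Xb (\<phi> z)) u =
      fst (partial1 g u) *\<^sub>R Xa (\<phi> u) + snd (partial1 g u) *\<^sub>R Xb (\<phi> u)
      + fst (g u) *\<^sub>R (fst (partial1 \<phi> u) *\<^sub>R Aa + snd (partial1 \<phi> u) *\<^sub>R Ab)
      + snd (g u) *\<^sub>R (fst (partial1 \<phi> u) *\<^sub>R Ba + snd (partial1 \<phi> u) *\<^sub>R Bb)" (is ?P1)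
    and "partial2 (\<lambda>z. fst (g z) *\<^sub>R Xa (\<phi> z) + snd (g z) *\<^sub>R Xb (\<phi> z)) u =
      fst (partial2 g u) *\<^sub>R Xa (\<phi> u) + snd (partial2 g u) *\<^sub>R Xb (\<phi> u)
      + fst (g u) *\<^sub>R (fst (partial2 \<phi> u) *\<^sub>R Aa + snd (partial2 \<phi> u) *\<^sub>R Ab)
      + snd (g u) *\<^sub>R (fst (partial2 \<phi> u) *\<^sub>R Ba + snd (partial2 \<phi> u) *\<^sub>R Bb)" (is ?P2)
proof -
  obtain s t where st: "u = (s, t)" by fastforce
  have uW: "(s, t) \<in> W" using u st by simp
  note DA' = DA[unfolded st] and DB' = DB[unfolded st]
  from has_vector_derivative_lincomb_comp[OF smooth2_on_has_partial1[OF smooth iter_partials.base uW]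
      smooth2_on_has_partial1[OF smooth g uW] DA' DB']
  show ?P1 unfolding partial1_def st by (simp add: vector_derivative_at)
  from has_vector_derivative_lincomb_comp[OF smooth2_on_has_partial2[OF smooth iter_partials.base uW]
      smooth2_on_has_partial2[OF smooth g uW] DA' DB']
  show ?P2 unfolding partial2_def st by (simp add: vector_derivative_at)
qed

lemma second_partials_comp:
  assumes DX: "\<And>z. P z \<Longrightarrow> (X has_derivative (\<lambda>h. fst h *\<^sub>R Xa z + snd h *\<^sub>R Xb z)) (at z)"
    and DXa: "\<And>z. P z \<Longrightarrow> (Xa has_derivative (\<lambda>h. fst h *\<^sub>R Xaa z + snd h *\<^sub>R Xab z)) (at z)"
    and DXb: "\<And>z. P z \<Longrightarrow> (Xb has_derivative (\<lambda>h. fst h *\<^sub>R Xab z + snd h *\<^sub>R Xbb z)) (at z)"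
    and W: "open W" and u: "u \<in> W"
  defines "a1 \<equiv> fst (partial1 \<phi> u)" and "b1 \<equiv> snd (partial1 \<phi> u)"
    and "a2 \<equiv> fst (partial2 \<phi> u)" and "b2 \<equiv> snd (partial2 \<phi> u)"
  shows "partial1 (partial1 (X \<circ> \<phi>)) u =
        fst (partial1 (partial1 \<phi>) u) *\<^sub>R Xa (\<phi> u) + snd (partial1 (partial1 \<phi>) u) *\<^sub>R Xb (\<phi> u)
        + a1 *\<^sub>R (a1 *\<^sub>R Xaa (\<phi> u) + b1 *\<^sub>R Xab (\<phi> u)) + b1 *\<^sub>R (a1 *\<^sub>R Xab (\<phi> u) + b1 *\<^sub>R Xbb (\<phi> u))" (is ?P11)
    and "partial2 (partial1 (X \<circ> \<phi>)) u =
        fst (partial2 (partial1 \<phi>) u) *\<^sub>R Xa (\<phi> u) + snd (partial2 (partial1 \<phi>) u) *\<^sub>R Xb (\<phi> u)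
        + a1 *\<^sub>R (a2 *\<^sub>R Xaa (\<phi> u) + b2 *\<^sub>R Xab (\<phi> u)) + b1 *\<^sub>R (a2 *\<^sub>R Xab (\<phi> u) + b2 *\<^sub>R Xbb (\<phi> u))" (is ?P12)
    and "partial2 (partial2 (X \<circ> \<phi>)) u =
        fst (partial2 (partial2 \<phi>) u) *\<^sub>R Xa (\<phi> u) + snd (partial2 (partial2 \<phi>) u) *\<^sub>R Xb (\<phi> u)
        + a2 *\<^sub>R (a2 *\<^sub>R Xaa (\<phi> u) + b2 *\<^sub>R Xab (\<phi> u)) + b2 *\<^sub>R (a2 *\<^sub>R Xab (\<phi> u) + b2 *\<^sub>R Xbb (\<phi> u))" (is ?P22)
proof -
  have DA: "(Xa has_derivative (\<lambda>h. fst h *\<^sub>R Xaa (\<phi> u) + snd h *\<^sub>R Xab (\<phi> u))) (at (\<phi> u))"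
    and DB: "(Xb has_derivative (\<lambda>h. fst h *\<^sub>R Xab (\<phi> u) + snd h *\<^sub>R Xbb (\<phi> u))) (at (\<phi> u))"
    using DXa DXb maps u by blast+
  note d1 = partials_lincomb_comp[OF iter_partials.d1[OF iter_partials.base] u DA DB]
  note d2 = partials_lincomb_comp[OF iter_partials.d2[OF iter_partials.base] u DA DB]
  show ?P11
    using partial1_cong[OF W first_partials_comp(1)[OF DX] u] d1(1) by (simp add: a1_def b1_def)
  show ?P12
    using partial2_cong[OF W first_partials_comp(1)[OF DX] u] d1(2) by (simp add: a1_def b1_def a2_def b2_def)
  show ?P22
    using partial2_cong[OF W first_partials_comp(2)[OF DX] u] d2(2) by (simp add: a2_def b2_def)
qed

end


section \<open>Rotations about an axis and surfaces of revolution\<close>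

lemma cross3_cramer:
  "(a \<bullet> cross3 b c) *\<^sub>R r = (r \<bullet> cross3 b c) *\<^sub>R a + (r \<bullet> cross3 c a) *\<^sub>R b + (r \<bullet> cross3 a b) *\<^sub>R c"
  by (simp add: cross3_simps forall_3)

lemma orthonormal_frame_cross3:
  assumes v: "v \<bullet> v = 1" and w: "w \<bullet> w = 1" and vw: "v \<bullet> w = 0"
  shows "cross3 v w \<bullet> cross3 v w = 1" "cross3 v w \<bullet> v = 0" "cross3 v w \<bullet> w = 0"
    "v \<bullet> cross3 v w = 0" "w \<bullet> cross3 v w = 0" "w \<bullet> v = 0"
    "cross3 w (cross3 v w) = v" "cross3 (cross3 v w) v = w" "cross3 w v = - cross3 v w"
    "cross3 (cross3 v w) w = - v" "cross3 v (cross3 v w) = - w"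
proof -
  have "(norm (cross3 v w))\<^sup>2 + (v \<bullet> w)\<^sup>2 = (norm v * norm w)\<^sup>2" by (rule norm_cross_dot)
  then show "cross3 v w \<bullet> cross3 v w = 1" using v w vw by (simp add: power2_norm_eq_inner norm_eq_sqrt_inner)
  show "cross3 v w \<bullet> v = 0" "cross3 v w \<bullet> w = 0" "v \<bullet> cross3 v w = 0" "w \<bullet> cross3 v w = 0"
    by (simp_all add: dot_cross_self)
  show "w \<bullet> v = 0" using vw by (simp add: inner_commute)
  show "cross3 w (cross3 v w) = v" using w vw by (simp add: Lagrange inner_commute)
  show "cross3 (cross3 v w) v = w"
    using v vw by (simp add: cross_skew[of "cross3 v w" v] Lagrange)
  show "cross3 w v = - cross3 v w" by (rule cross_skew)
  show "cross3 (cross3 v w) w = - v"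
    using w vw by (simp add: cross_skew[of "cross3 v w" w] Lagrange inner_commute)
  show "cross3 v (cross3 v w) = - w" using v vw by (simp add: Lagrange)
qed

lemma orthonormal_frame_decomp:
  assumes v: "v \<bullet> v = 1" and n: "n \<bullet> n = 1" and vn: "v \<bullet> n = 0" and z: "z \<bullet> n = 0"
  shows "z = (z \<bullet> v) *\<^sub>R v + (z \<bullet> cross3 n v) *\<^sub>R cross3 n v"
proof -
  define w where "w = cross3 n v"
  have nv: "n \<bullet> v = 0" using vn by (simp add: inner_commute)
  note frame = orthonormal_frame_cross3[OF n v nv, folded w_def]
  define r where "r = z - (z \<bullet> v) *\<^sub>R v - (z \<bullet> w) *\<^sub>R w"
  have r: "r \<bullet> v = 0" "r \<bullet> n = 0" "r \<bullet> w = 0"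
    unfolding r_def using v vn z frame by (simp_all add: inner_diff_right inner_commute)
  have "(v \<bullet> cross3 n w) *\<^sub>R r = (r \<bullet> cross3 n w) *\<^sub>R v + (r \<bullet> cross3 w v) *\<^sub>R n + (r \<bullet> cross3 v n) *\<^sub>R w"
    by (rule cross3_cramer)
  also have "\<dots> = 0"
    using r frame by (simp add: w_def cross_skew[of v n] inner_commute)
  finally have "r = 0" using v frame by (simp add: w_def)
  then show ?thesis unfolding r_def w_def by (simp add: algebra_simps)
qed

text \<open>
  Rotations about \<open>v\<close> and their derivatives
  with respect to the angle are of this form.
\<close>
definition axial_lin :: "real^3 \<Rightarrow> real \<Rightarrow> real \<Rightarrow> real \<Rightarrow> real^3 \<Rightarrow> real^3" where
  "axial_lin v k c s z = (k * (z \<bullet> v)) *\<^sub>R v + c *\<^sub>R (z - (z \<bullet> v) *\<^sub>R v) + s *\<^sub>R cross3 v z"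

lemma rot_about_eq_axial_lin: "rot_about a v \<theta> x = a + axial_lin v 1 (cos \<theta>) (sin \<theta>) (x - a)"
  unfolding rot_about_def axial_lin_def by simp

lemma axial_lin_at_zero_angle:
  "axial_lin v 1 1 0 z = z" "axial_lin v 0 0 1 z = cross3 v z" "axial_lin v 0 (- 1) 0 z = (z \<bullet> v) *\<^sub>R v - z"
  unfolding axial_lin_def by simp_all

lemma bounded_linear_cross3: "bounded_linear (cross3 v)"
  using bilinear_cross unfolding bilinear_def by (simp add: linear_conv_bounded_linear)

lemma has_derivative_axial_lin:
  assumes f: "(f has_vector_derivative f') (at t0)"
    and c: "(c has_real_derivative c') (at \<theta>0)" and s: "(s has_real_derivative s') (at \<theta>0)"
  shows "((\<lambda>z. axial_lin v k (c (snd z)) (s (snd z)) (f (fst z))) has_derivative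
      (\<lambda>h. fst h *\<^sub>R axial_lin v k (c \<theta>0) (s \<theta>0) f' + snd h *\<^sub>R axial_lin v 0 c' s' (f t0))) (at (t0, \<theta>0))"
proof -
  have F: "((\<lambda>z. f (fst z)) has_derivative (\<lambda>h. fst h *\<^sub>R f')) (at (t0, \<theta>0))"
    using has_derivative_compose[OF has_derivative_fst[OF has_derivative_ident], of f "\<lambda>x. x *\<^sub>R f'" "(t0, \<theta>0)" UNIV] f
    by (simp add: has_vector_derivative_def)
  have C: "((\<lambda>z. c (snd z)) has_derivative (\<lambda>h. c' * snd h)) (at (t0, \<theta>0))"
    using has_derivative_compose[OF has_derivative_snd[OF has_derivative_ident], of c "\<lambda>x. c' * x" "(t0, \<theta>0)" UNIV] c
    by (simp add: has_field_derivative_def)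
  have S: "((\<lambda>z. s (snd z)) has_derivative (\<lambda>h. s' * snd h)) (at (t0, \<theta>0))"
    using has_derivative_compose[OF has_derivative_snd[OF has_derivative_ident], of s "\<lambda>x. s' * x" "(t0, \<theta>0)" UNIV] s
    by (simp add: has_field_derivative_def)
  have X: "((\<lambda>z. cross3 v (f (fst z))) has_derivative (\<lambda>h. cross3 v (fst h *\<^sub>R f'))) (at (t0, \<theta>0))"
    by (rule bounded_linear.has_derivative[OF bounded_linear_cross3 F])
  show ?thesis unfolding axial_lin_def
    by (rule has_derivative_eq_rhs, (rule derivative_eq_intros F C S X refl | simp)+)
      (simp add: fun_eq_iff algebra_simps cross_mult_right inner_diff_left)
qed

lemma rot_about_zero_pi:
  assumes "v \<bullet> v = 1" "v \<bullet> w = 0"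
  shows "rot_about a v 0 (a + x *\<^sub>R v + y *\<^sub>R w) = a + x *\<^sub>R v + y *\<^sub>R w"
    and "rot_about a v pi (a + x *\<^sub>R v + y *\<^sub>R w) = a + x *\<^sub>R v - y *\<^sub>R w"
  using assms by (simp_all add: rot_about_def inner_add_left inner_add_right inner_commute add.assoc)

text \<open>
  For the surface of revolution about the axis \<open>v\<close> generated by a profile \<open>x v + y w\<close> with
  \<open>y > 0\<close>, this is the sum of its principal curvatures (up to sign): the curvature of the
  profile plus the normal curvature of the parallel circles.
\<close>
definition revolution_curv_sum :: "real \<Rightarrow> real \<Rightarrow> real \<Rightarrow> real \<Rightarrow> real \<Rightarrow> real" where
  "revolution_curv_sum y x' y' x'' y'' =
     x' / (sqrt (x'\<^sup>2 + y'\<^sup>2) * y) - (x' * y'' - x'' * y') / sqrt (x'\<^sup>2 + y'\<^sup>2) ^ 3"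

lemma norm_mean_curv_revolution:
  assumes v: "v \<bullet> v = 1" and w: "w \<bullet> w = 1" and vw: "v \<bullet> w = 0"
    and y: "y > 0" and regular: "x'\<^sup>2 + y'\<^sup>2 > 0"
  shows "norm (mean_curv_of_partials (x' *\<^sub>R v + y' *\<^sub>R w) (cross3 v (x *\<^sub>R v + y *\<^sub>R w))
      (x'' *\<^sub>R v + y'' *\<^sub>R w) (cross3 v (x' *\<^sub>R v + y' *\<^sub>R w))
      (((x *\<^sub>R v + y *\<^sub>R w) \<bullet> v) *\<^sub>R v - (x *\<^sub>R v + y *\<^sub>R w)))
    = \<bar>revolution_curv_sum y x' y' x'' y''\<bar> / 2"
proof -
  define u where "u = cross3 v w"
  note frame = orthonormal_frame_cross3[OF v w vw, folded u_def]
  define S where "S = x'\<^sup>2 + y'\<^sup>2"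
  define \<sigma> where "\<sigma> = sqrt S"
  have \<sigma>: "\<sigma> > 0" "\<sigma>\<^sup>2 = S" using regular unfolding \<sigma>_def S_def by simp_all
  have B: "cross3 v (x *\<^sub>R v + y *\<^sub>R w) = y *\<^sub>R u"
    and Ab: "cross3 v (x' *\<^sub>R v + y' *\<^sub>R w) = y' *\<^sub>R u"
    and Bb: "((x *\<^sub>R v + y *\<^sub>R w) \<bullet> v) *\<^sub>R v - (x *\<^sub>R v + y *\<^sub>R w) = - (y *\<^sub>R w)"
    using v vw by (simp_all add: u_def cross_add_right cross_mult_right inner_add_left inner_add_right
        inner_commute)
  have c: "cross3 (x' *\<^sub>R v + y' *\<^sub>R w) (y *\<^sub>R u) = (y' * y) *\<^sub>R v - (x' * y) *\<^sub>R w"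
    using frame by (simp add: u_def cross_add_left cross_mult_left cross_mult_right scaleR_diff_right mult.commute)
  have norm_c: "norm ((y' * y) *\<^sub>R v - (x' * y) *\<^sub>R w) = y * \<sigma>"
  proof -
    have "((y' * y) *\<^sub>R v - (x' * y) *\<^sub>R w) \<bullet> ((y' * y) *\<^sub>R v - (x' * y) *\<^sub>R w) = y\<^sup>2 * S"
      using v w vw by (simp add: S_def inner_diff_left inner_diff_right inner_commute power2_eq_square
          algebra_simps)
    also have "\<dots> = (y * \<sigma>)\<^sup>2" by (simp add: power_mult_distrib \<sigma>(2))
    finally have "((y' * y) *\<^sub>R v - (x' * y) *\<^sub>R w) \<bullet> ((y' * y) *\<^sub>R v - (x' * y) *\<^sub>R w) = (y * \<sigma>)\<^sup>2" .
    then show ?thesis using y \<sigma> by (simp add: norm_eq_sqrt_inner)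
  qed
  have "norm (mean_curv_of_partials (x' *\<^sub>R v + y' *\<^sub>R w) (y *\<^sub>R u) (x'' *\<^sub>R v + y'' *\<^sub>R w) (y' *\<^sub>R u) (- (y *\<^sub>R w)))
     = \<bar>S * (x' * y\<^sup>2) + y\<^sup>2 * (y * (x'' * y' - x' * y''))\<bar> / (2 * \<bar>S * y\<^sup>2\<bar> * (y * \<sigma>))"
    unfolding norm_mean_curv_of_partials c norm_c using v w vw frame
    by (simp add: S_def inner_add_left inner_add_right inner_diff_right inner_commute
        power2_eq_square algebra_simps)
  also have "\<dots> = \<bar>x' / (\<sigma> * y) - (x' * y'' - x'' * y') / \<sigma> ^ 3\<bar> / 2"
  proof -
    have "S * (x' * y\<^sup>2) + y\<^sup>2 * (y * (x'' * y' - x' * y''))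
        = y\<^sup>2 * (\<sigma> ^ 3 * y) * (x' / (\<sigma> * y) - (x' * y'' - x'' * y') / \<sigma> ^ 3)"
    proof -
      have "y\<^sup>2 * (\<sigma> ^ 3 * y) * (x' / (\<sigma> * y) - (x' * y'' - x'' * y') / \<sigma> ^ 3)
          = y\<^sup>2 * \<sigma>\<^sup>2 * x' - y ^ 3 * (x' * y'' - x'' * y')"
        using \<sigma>(1) y by (simp add: field_simps power3_eq_cube power2_eq_square)
      then show ?thesis unfolding \<sigma>(2) by (simp add: power2_eq_square power3_eq_cube algebra_simps)
    qed
    moreover have "2 * \<bar>S * y\<^sup>2\<bar> * (y * \<sigma>) = 2 * (y\<^sup>2 * (\<sigma> ^ 3 * y))"
      using \<sigma> y by (simp add: \<sigma>(2)[symmetric] power2_eq_square power3_eq_cube algebra_simps)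
    ultimately show ?thesis using \<sigma> y by (simp add: abs_mult)
  qed
  finally show ?thesis
    unfolding B Ab Bb revolution_curv_sum_def \<sigma>_def S_def by simp
qed


section \<open>Charts of the end\<close>

lemma periodic_int_multiple:
  assumes per: "\<And>t \<theta>. p (t, \<theta> + 2 * pi) = p (t, \<theta>)"
  shows "p (t, \<theta> + 2 * pi * of_int k) = p (t, \<theta>)"
proof -
  have nat: "p (t, \<theta> + 2 * pi * real m) = p (t, \<theta>)" for \<theta> m
  proof (induction m)
    case (Suc m)
    have "p (t, \<theta> + 2 * pi * real (Suc m)) = p (t, (\<theta> + 2 * pi * real m) + 2 * pi)"
      by (simp add: algebra_simps)
    with Suc show ?case by (simp only: per)
  qed simp
  show ?thesis
  proof (cases "k \<ge> 0")
    case True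
    then show ?thesis using nat[of \<theta> "nat k"] by simp
  next
    case False
    have "p (t, (\<theta> + 2 * pi * of_int k) + 2 * pi * real (nat (- k))) = p (t, \<theta> + 2 * pi * of_int k)"
      by (rule nat)
    with False show ?thesis by simp
  qed
qed

lemma inj_on_ball_periodic:
  assumes per: "\<And>t \<theta>. p (t, \<theta> + 2 * pi) = p (t, \<theta>)"
    and inj: "inj_on p {z. fst z \<ge> 0 \<and> 0 \<le> snd z \<and> snd z < 2 * pi}"
    and t0: "t0 > 0"
  shows "inj_on p (ball (t0, \<theta>0) (min t0 pi))"
proof (rule inj_onI)
  fix z1 z2
  assume "z1 \<in> ball (t0, \<theta>0) (min t0 pi)" "z2 \<in> ball (t0, \<theta>0) (min t0 pi)" and eq: "p z1 = p z2"
  moreover obtain t1 \<theta>1 t2 \<theta>2 where z: "z1 = (t1, \<theta>1)" "z2 = (t2, \<theta>2)" by fastforce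
  ultimately have "dist t0 t1 < t0" "dist \<theta>0 \<theta>1 < pi" "dist t0 t2 < t0" "dist \<theta>0 \<theta>2 < pi"
    by (auto simp: dist_Pair_Pair intro: le_less_trans[OF real_sqrt_sum_squares_ge1]
        le_less_trans[OF real_sqrt_sum_squares_ge2])
  then have t: "t1 > 0" "t2 > 0" and \<theta>: "\<bar>\<theta>1 - \<theta>2\<bar> < 2 * pi" by (auto simp: dist_real_def)
  define k1 where "k1 = \<lfloor>\<theta>1 / (2 * pi)\<rfloor>"
  define k2 where "k2 = \<lfloor>\<theta>2 / (2 * pi)\<rfloor>"
  have r: "0 \<le> \<theta>1 - 2 * pi * of_int k1" "\<theta>1 - 2 * pi * of_int k1 < 2 * pi"
    "0 \<le> \<theta>2 - 2 * pi * of_int k2" "\<theta>2 - 2 * pi * of_int k2 < 2 * pi"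
  proof -
    have "of_int k1 \<le> \<theta>1 / (2 * pi)" "\<theta>1 / (2 * pi) < of_int k1 + 1"
      "of_int k2 \<le> \<theta>2 / (2 * pi)" "\<theta>2 / (2 * pi) < of_int k2 + 1"
      unfolding k1_def k2_def by linarith+
    then show "0 \<le> \<theta>1 - 2 * pi * of_int k1" "\<theta>1 - 2 * pi * of_int k1 < 2 * pi"
      "0 \<le> \<theta>2 - 2 * pi * of_int k2" "\<theta>2 - 2 * pi * of_int k2 < 2 * pi"
      by (simp_all add: field_simps)
  qed
  have "p (t1, \<theta>1 - 2 * pi * of_int k1) = p (t2, \<theta>2 - 2 * pi * of_int k2)"
    using eq z periodic_int_multiple[OF per, of t1 "\<theta>1 - 2 * pi * of_int k1" k1]
      periodic_int_multiple[OF per, of t2 "\<theta>2 - 2 * pi * of_int k2" k2] by simp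
  then have "(t1, \<theta>1 - 2 * pi * of_int k1) = (t2, \<theta>2 - 2 * pi * of_int k2)"
    by (rule inj_onD[OF inj]) (use r t in auto)
  then have "t1 = t2" and k: "\<theta>1 - \<theta>2 = 2 * pi * of_int (k1 - k2)" by (auto simp: algebra_simps)
  from \<theta> have "\<bar>of_int (k1 - k2)\<bar> < (1::real)" unfolding k by (simp add: abs_mult)
  then have "k1 = k2" by linarith
  with \<open>t1 = t2\<close> k z show "z1 = z2" by simp
qed

lemma revolution_end_chart:
  assumes atlas: "surface_atlas M A"
    and pM: "\<And>z. fst z > 0 \<Longrightarrow> p z \<in> M"
    and per: "\<And>t \<theta>. p (t, \<theta> + 2 * pi) = p (t, \<theta>)"
    and inj: "inj_on p {z. fst z \<ge> 0 \<and> 0 \<le> snd z \<and> snd z < 2 * pi}"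
    and comp: "\<forall>V. open V \<and> V \<subseteq> {z. fst z > 0} \<and> inj_on p V \<longrightarrow>
             (\<forall>P \<in> A. compatible_params (V, p) P \<and> compatible_params P (V, p))"
    and Fp: "\<And>z. fst z \<ge> 0 \<Longrightarrow> F (p z) = revolution_map a v \<beta> z"
    and t0: "t0 > 0"
  obtains U q W \<phi> u0 where "(U, q) \<in> A" "W \<subseteq> U" "open W" "u0 \<in> W" "smooth2_on W \<phi>"
    "\<phi> u0 = (t0, \<theta>0)" "\<And>u. u \<in> W \<Longrightarrow> fst (\<phi> u) > 0"
    "\<And>u. u \<in> W \<Longrightarrow> (F \<circ> q) u = revolution_map a v \<beta> (\<phi> u)"
proof -
  define z0 where "z0 = (t0, \<theta>0)"
  have "M = (\<Union>(U, p) \<in> A. p ` U)" using atlas by (simp add: surface_atlas_def)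
  with pM[of z0] t0 obtain U q u0 where Uq: "(U, q) \<in> A" "u0 \<in> U" "q u0 = p z0"
    by (auto simp: z0_def)
  define V where "V = ball z0 (min t0 pi)"
  have V: "open V" "inj_on p V" "z0 \<in> V"
    using inj_on_ball_periodic[OF per inj t0] t0 by (simp_all add: V_def z0_def)
  have V_pos: "V \<subseteq> {z. fst z > 0}"
  proof
    fix z assume "z \<in> V"
    then have "dist (fst z0) (fst z) < t0" unfolding V_def using dist_fst_le[of z0 z] by simp
    then show "z \<in> {z. fst z > 0}" by (auto simp: z0_def dist_real_def)
  qed
  define W where "W = {u \<in> U. q u \<in> p ` V}"
  define \<phi> where "\<phi> = inv_into V p \<circ> q"
  have "compatible_params (U, q) (V, p)" using comp V V_pos Uq(1) by blast
  then have W: "open W" "smooth2_on W \<phi>"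
    unfolding compatible_params_def Let_def W_def \<phi>_def by simp_all
  have \<phi>V: "\<phi> u \<in> V" and p\<phi>: "p (\<phi> u) = q u" if "u \<in> W" for u
    using that by (auto simp: W_def \<phi>_def intro: inv_into_into f_inv_into_f)
  show thesis
  proof
    show "(U, q) \<in> A" "W \<subseteq> U" "open W" "u0 \<in> W" "smooth2_on W \<phi>"
      using Uq V W by (auto simp: W_def)
    show "\<phi> u0 = (t0, \<theta>0)" unfolding \<phi>_def z0_def[symmetric] using Uq(3) V by (simp add: inv_into_f_f)
    show "fst (\<phi> u) > 0" if "u \<in> W" for u using \<phi>V[OF that] V_pos by blast
    show "(F \<circ> q) u = revolution_map a v \<beta> (\<phi> u)" if "u \<in> W" for u
      using Fp[of "\<phi> u"] p\<phi>[OF that] \<phi>V[OF that] V_pos by fastforce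
  qed
qed


section \<open>The mean curvature of the end\<close>

lemma norm_mean_curv_vec_reparam:
  assumes DX: "\<And>z. P z \<Longrightarrow> (X has_derivative (\<lambda>h. fst h *\<^sub>R Xa z + snd h *\<^sub>R Xb z)) (at z)"
    and DXa: "\<And>z. P z \<Longrightarrow> (Xa has_derivative (\<lambda>h. fst h *\<^sub>R Xaa z + snd h *\<^sub>R Xab z)) (at z)"
    and DXb: "\<And>z. P z \<Longrightarrow> (Xb has_derivative (\<lambda>h. fst h *\<^sub>R Xab z + snd h *\<^sub>R Xbb z)) (at z)"
    and W: "open W" and smooth: "smooth2_on W \<phi>" and maps: "\<And>u. u \<in> W \<Longrightarrow> P (\<phi> u)"
    and Y: "\<And>u. u \<in> W \<Longrightarrow> Y u = X (\<phi> u)" and u: "u \<in> W"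
    and immersed: "cross3 (partial1 Y u) (partial2 Y u) \<noteq> 0"
  shows "norm (mean_curv_vec Y u) =
    norm (mean_curv_of_partials (Xa (\<phi> u)) (Xb (\<phi> u)) (Xaa (\<phi> u)) (Xab (\<phi> u)) (Xbb (\<phi> u)))"
proof -
  have Y_comp: "\<And>u. u \<in> W \<Longrightarrow> Y u = (X \<circ> \<phi>) u" using Y by simp
  note first = first_partials_comp[where \<phi> = \<phi> and P = P, OF smooth maps DX u]
  note second = second_partials_comp[where \<phi> = \<phi> and P = P, OF smooth maps DX DXa DXb W u]
  have "partial1 Y u = partial1 (X \<circ> \<phi>) u" using W Y_comp u by (rule partial1_cong)
  moreover have "partial2 Y u = partial2 (X \<circ> \<phi>) u" using W Y_comp u by (rule partial2_cong)
  ultimately have "cross3 (partial1 (X \<circ> \<phi>) u) (partial2 (X \<circ> \<phi>) u) \<noteq> 0"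
    using immersed by simp
  then have "fst (partial1 \<phi> u) * snd (partial2 \<phi> u) - snd (partial1 \<phi> u) * fst (partial2 \<phi> u) \<noteq> 0"
    by (auto simp: first cross3_lincomb)
  note invariant = norm_mean_curv_of_partials_reparam[OF refl this]
  have "mean_curv_vec Y u = mean_curv_vec (X \<circ> \<phi>) u" using W Y_comp u by (rule mean_curv_vec_cong)
  then have "norm (mean_curv_vec Y u) = norm (mean_curv_vec (X \<circ> \<phi>) u)" by simp
  also have "\<dots> = norm (mean_curv_of_partials (Xa (\<phi> u)) (Xb (\<phi> u)) (Xaa (\<phi> u)) (Xab (\<phi> u)) (Xbb (\<phi> u)))"
    unfolding mean_curv_vec_eq_of_partials using invariant by (simp only: first second)
  finally show ?thesis .
qed

lemma has_derivative_revolution_map: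
  fixes a v :: "real^3" and \<beta> \<beta>' \<beta>'' :: "real \<Rightarrow> real^3"
  assumes d0: "\<And>t. t > 0 \<Longrightarrow> (\<beta> has_vector_derivative \<beta>' t) (at t)"
    and d1: "\<And>t. t > 0 \<Longrightarrow> (\<beta>' has_vector_derivative \<beta>'' t) (at t)"
    and z: "fst z > 0"
  shows "(revolution_map a v \<beta> has_derivative (\<lambda>h.
      fst h *\<^sub>R axial_lin v 1 (cos (snd z)) (sin (snd z)) (\<beta>' (fst z)) +
      snd h *\<^sub>R axial_lin v 0 (- sin (snd z)) (cos (snd z)) (\<beta> (fst z) - a))) (at z)" (is ?DX)
    and "((\<lambda>z. axial_lin v 1 (cos (snd z)) (sin (snd z)) (\<beta>' (fst z))) has_derivative (\<lambda>h.
      fst h *\<^sub>R axial_lin v 1 (cos (snd z)) (sin (snd z)) (\<beta>'' (fst z)) +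
      snd h *\<^sub>R axial_lin v 0 (- sin (snd z)) (cos (snd z)) (\<beta>' (fst z)))) (at z)" (is ?DXa)
    and "((\<lambda>z. axial_lin v 0 (- sin (snd z)) (cos (snd z)) (\<beta> (fst z) - a)) has_derivative (\<lambda>h.
      fst h *\<^sub>R axial_lin v 0 (- sin (snd z)) (cos (snd z)) (\<beta>' (fst z)) +
      snd h *\<^sub>R axial_lin v 0 (- cos (snd z)) (- sin (snd z)) (\<beta> (fst z) - a))) (at z)" (is ?DXb)
proof -
  obtain t \<theta> where z_eq: "z = (t, \<theta>)" by fastforce
  with z have t: "t > 0" by simp
  have d0': "((\<lambda>t. \<beta> t - a) has_vector_derivative \<beta>' t) (at t)"
    using d0[OF t] by (auto intro!: derivative_eq_intros)
  have msin: "((\<lambda>x. - sin x) has_real_derivative - cos \<theta>) (at \<theta>)"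
    by (auto intro!: derivative_eq_intros)
  have "((\<lambda>z. a + axial_lin v 1 (cos (snd z)) (sin (snd z)) (\<beta> (fst z) - a)) has_derivative (\<lambda>h.
      fst h *\<^sub>R axial_lin v 1 (cos \<theta>) (sin \<theta>) (\<beta>' t) +
      snd h *\<^sub>R axial_lin v 0 (- sin \<theta>) (cos \<theta>) (\<beta> t - a))) (at (t, \<theta>))"
    using has_derivative_add[OF has_derivative_const has_derivative_axial_lin[OF d0' DERIV_cos DERIV_sin]]
    by simp
  then show ?DX
    unfolding revolution_map_def rot_about_eq_axial_lin case_prod_beta z_eq by simp
  show ?DXa
    using has_derivative_axial_lin[OF d1[OF t] DERIV_cos DERIV_sin, of v 1] by (simp add: z_eq)
  show ?DXb
    using has_derivative_axial_lin[OF d0' msin DERIV_cos, of v 0] by (simp add: z_eq)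
qed

lemma revolution_end_mean_curv:
  assumes imm: "surface_immersion M A F"
    and pM: "\<And>z. fst z > 0 \<Longrightarrow> p z \<in> M"
    and per: "\<And>t \<theta>. p (t, \<theta> + 2 * pi) = p (t, \<theta>)"
    and inj: "inj_on p {z. fst z \<ge> 0 \<and> 0 \<le> snd z \<and> snd z < 2 * pi}"
    and comp: "\<forall>V. open V \<and> V \<subseteq> {z. fst z > 0} \<and> inj_on p V \<longrightarrow>
             (\<forall>P \<in> A. compatible_params (V, p) P \<and> compatible_params P (V, p))"
    and Fp: "\<And>z. fst z \<ge> 0 \<Longrightarrow> F (p z) = revolution_map a v \<beta> z"
    and d0: "\<And>t. t > 0 \<Longrightarrow> (\<beta> has_vector_derivative \<beta>' t) (at t)"
    and d1: "\<And>t. t > 0 \<Longrightarrow> (\<beta>' has_vector_derivative \<beta>'' t) (at t)"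
    and t0: "t0 > 0"
  obtains U q u where "(U, q) \<in> A" "u \<in> U"
    "norm (mean_curv_vec (F \<circ> q) u) = norm (mean_curv_of_partials (\<beta>' t0) (cross3 v (\<beta> t0 - a))
       (\<beta>'' t0) (cross3 v (\<beta>' t0)) (((\<beta> t0 - a) \<bullet> v) *\<^sub>R v - (\<beta> t0 - a)))"
proof -
  have atlas: "surface_atlas M A" using imm by (simp add: surface_immersion_def)
  obtain U q W \<phi> u0 where Uq: "(U, q) \<in> A" "W \<subseteq> U" "open W" "u0 \<in> W" "smooth2_on W \<phi>"
    "\<phi> u0 = (t0, 0)" "\<And>u. u \<in> W \<Longrightarrow> fst (\<phi> u) > 0"
    and chart: "\<And>u. u \<in> W \<Longrightarrow> (F \<circ> q) u = revolution_map a v \<beta> (\<phi> u)"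
    using revolution_end_chart[OF atlas pM per inj comp Fp t0] by metis
  have "immersion_on U (F \<circ> q)" using imm Uq(1) by (auto simp: surface_immersion_def)
  then have immersed: "cross3 (partial1 (F \<circ> q) u0) (partial2 (F \<circ> q) u0) \<noteq> 0"
    using Uq by (auto simp: immersion_on_def)
  \<comment> \<open>\<open>simplified\<close> discards the premises \<open>\<And>t. 0 < t \<Longrightarrow> 0 < t\<close> left over by \<open>OF\<close>\<close>
  note D = has_derivative_revolution_map[OF d0 d1, simplified]
  note reparam = norm_mean_curv_vec_reparam[where P = "\<lambda>z. 0 < fst z", OF D, simplified]
  from reparam[OF Uq(3,5) Uq(7) chart Uq(4) immersed] Uq(1,2,4,6)
  show thesis by (intro that[of U q u0]) (auto simp: axial_lin_at_zero_angle)
qed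


section \<open>A barrier for the profile curve\<close>

lemma abs_inner2_le:
  fixes a b c d R s :: real
  assumes "a\<^sup>2 + b\<^sup>2 \<le> R\<^sup>2" "c\<^sup>2 + d\<^sup>2 = s\<^sup>2" "R \<ge> 0" "s \<ge> 0"
  shows "\<bar>a * c + b * d\<bar> \<le> R * s"
proof -
  have "(a * c + b * d)\<^sup>2 \<le> (a\<^sup>2 + b\<^sup>2) * (c\<^sup>2 + d\<^sup>2)"
    using sum_power2_ge_zero[of "a * d - b * c" 0] by (simp add: power2_eq_square algebra_simps)
  also have "\<dots> \<le> (R * s)\<^sup>2"
    using assms by (simp add: power_mult_distrib mult_right_mono)
  finally have "\<bar>a * c + b * d\<bar>\<^sup>2 \<le> (R * s)\<^sup>2" by simp
  then show ?thesis by (rule power2_le_imp_le) (use assms in simp)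
qed

lemma abs_le_of_sum_squares:
  fixes a b s :: real
  assumes "s \<ge> 0" "s\<^sup>2 = a\<^sup>2 + b\<^sup>2"
  shows "\<bar>a\<bar> \<le> s"
  by (rule power2_le_imp_le) (use assms in simp_all)

lemma integral_le_diff_of_deriv_ge:
  fixes Z D g :: "real \<Rightarrow> real"
  assumes "a \<le> b" and "\<And>t. t \<in> {a..b} \<Longrightarrow> (Z has_real_derivative D t) (at t)"
    and "\<And>t. t \<in> {a..b} \<Longrightarrow> g t \<le> D t" and "g integrable_on {a..b}"
  shows "integral {a..b} g \<le> Z b - Z a"
proof -
  have "(D has_integral (Z b - Z a)) {a..b}"
    using assms(1,2) by (intro fundamental_theorem_of_calculus)
      (auto simp: has_real_derivative_iff_has_vector_derivative[symmetric] intro: has_field_derivative_at_within)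
  with assms(3,4) show ?thesis by (intro has_integral_le[OF integrable_integral]) auto
qed

text \<open>
  The derivative of \<open>Z = y P / \<sigma>\<close>, \<open>P = (x\<^sup>2 + y\<^sup>2 + \<mu> y)'\<close>, \<open>\<sigma> = \<parallel>(x', y')\<parallel>\<close>, rearranged so that the
  sum of principal curvatures \<open>k\<close> of the surface of revolution appears.
\<close>
lemma barrier_deriv_eq:
  fixes x y x' y' x'' y'' \<mu> \<sigma> :: real
  assumes \<sigma>: "\<sigma> > 0" "\<sigma>\<^sup>2 = x'\<^sup>2 + y'\<^sup>2" and y: "y > 0"
  defines "P \<equiv> 2 * x * x' + 2 * y * y' + \<mu> * y'"
    and "P' \<equiv> 2 * x' * x' + 2 * x * x'' + 2 * y' * y' + 2 * y * y'' + \<mu> * y''"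
    and "k \<equiv> x' / (\<sigma> * y) - (x' * y'' - x'' * y') / \<sigma> ^ 3"
  shows "((y' * P + y * P') * \<sigma> - y * P * ((x' * x'' + y' * y'') / \<sigma>)) / (\<sigma> * \<sigma>)
     = \<sigma> * (4 * y + \<mu>) - k * y * (2 * (y * x' - x * y') + \<mu> * x')"
proof -
  define W where "W = 2 * (y * x' - x * y') + \<mu> * x'"
  have "((y' * P + y * P') * \<sigma> - y * P * ((x' * x'' + y' * y'') / \<sigma>)) / (\<sigma> * \<sigma>)
      = ((y' * P + y * P') * \<sigma>\<^sup>2 - y * P * (x' * x'' + y' * y'')) / \<sigma> ^ 3"
    using \<sigma>(1) by (simp add: field_simps power2_eq_square power3_eq_cube)
  also have "\<dots> = ((\<sigma>\<^sup>2)\<^sup>2 * (4 * y + \<mu>) - (x' * \<sigma>\<^sup>2 - y * (x' * y'' - x'' * y')) * W) / \<sigma> ^ 3"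
    unfolding \<sigma>(2) P_def P'_def W_def by (simp add: algebra_simps power2_eq_square)
  also have "\<dots> = \<sigma> * (4 * y + \<mu>) - k * y * W"
    using \<sigma>(1) y unfolding k_def by (simp add: field_simps power2_eq_square power3_eq_cube)
  finally show ?thesis unfolding W_def .
qed

lemma barrier_deriv_ge:
  fixes x y x' y' k \<mu> \<sigma> h R :: real
  assumes \<sigma>: "\<sigma> > 0" "\<sigma>\<^sup>2 = x'\<^sup>2 + y'\<^sup>2" and y: "y > 0" and disc: "x\<^sup>2 + y\<^sup>2 \<le> R\<^sup>2" and R: "R > 0"
    and k: "\<bar>k\<bar> \<le> 2 * h" and h: "h \<ge> 0" and \<mu>: "\<mu> \<ge> 0" "2 * h * \<mu> \<le> 4 * (1 - h * R)"
  shows "\<sigma> * (4 * y + \<mu>) - k * y * (2 * (y * x' - x * y') + \<mu> * x') \<ge> \<mu> * \<sigma>"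
proof -
  have "\<bar>y * x' + (- x) * y'\<bar> \<le> R * \<sigma>"
    by (rule abs_inner2_le) (use disc \<sigma> R in \<open>simp_all add: add.commute\<close>)
  moreover have "\<bar>x'\<bar> \<le> \<sigma>" using \<sigma> by (intro abs_le_of_sum_squares) simp_all
  ultimately have W: "\<bar>2 * (y * x' - x * y') + \<mu> * x'\<bar> \<le> 2 * R * \<sigma> + \<mu> * \<sigma>"
    using \<mu>(1) by (simp add: abs_mult abs_triangle_ineq[THEN order_trans] mult_left_mono add_mono)
  have "\<bar>k * y * (2 * (y * x' - x * y') + \<mu> * x')\<bar> \<le> (2 * h) * y * (2 * R * \<sigma> + \<mu> * \<sigma>)"
    unfolding abs_mult using k y h W by (intro mult_mono) auto
  also have "\<dots> \<le> 4 * \<sigma> * y"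
  proof -
    have "2 * h * (2 * R + \<mu>) \<le> 4" using \<mu> h R by (simp add: algebra_simps)
    then have "(2 * h * (2 * R + \<mu>)) * (y * \<sigma>) \<le> 4 * (y * \<sigma>)" using y \<sigma> by (intro mult_right_mono) auto
    then show ?thesis by (simp add: algebra_simps)
  qed
  finally show ?thesis by (simp add: algebra_simps abs_le_iff)
qed

lemma abs_barrier_le:
  fixes x y x' y' \<mu> \<sigma> R :: real
  assumes \<sigma>: "\<sigma> > 0" "\<sigma>\<^sup>2 = x'\<^sup>2 + y'\<^sup>2" and disc: "x\<^sup>2 + y\<^sup>2 \<le> R\<^sup>2" and R: "R > 0" and \<mu>: "\<mu> \<ge> 0"
  shows "\<bar>y * (2 * x * x' + 2 * y * y' + \<mu> * y') / \<sigma>\<bar> \<le> R * (2 * R + \<mu>)"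
proof -
  have "\<bar>x * x' + y * y'\<bar> \<le> R * \<sigma>" by (rule abs_inner2_le) (use disc \<sigma> R in auto)
  moreover have "\<bar>y'\<bar> \<le> \<sigma>" using \<sigma> by (intro abs_le_of_sum_squares[of _ _ x']) (simp_all add: add.commute)
  ultimately have "\<bar>2 * x * x' + 2 * y * y' + \<mu> * y'\<bar> \<le> (2 * R + \<mu>) * \<sigma>"
    using \<mu> by (simp add: abs_mult abs_triangle_ineq[THEN order_trans] mult_left_mono add_mono algebra_simps)
  moreover have "\<bar>y\<bar> \<le> R"
  proof (rule power2_le_imp_le)
    have "y\<^sup>2 \<le> R\<^sup>2" using disc zero_le_power2[of x] by linarith
    then show "\<bar>y\<bar>\<^sup>2 \<le> R\<^sup>2" by simp
  qed (use R in simp)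
  ultimately have "\<bar>y * (2 * x * x' + 2 * y * y' + \<mu> * y')\<bar> \<le> R * ((2 * R + \<mu>) * \<sigma>)"
    unfolding abs_mult by (intro mult_mono) auto
  with \<sigma> show ?thesis by (simp add: abs_divide pos_divide_le_eq mult.assoc)
qed

lemma profile_mean_curv_bound:
  fixes x y x' y' x'' y'' :: "real \<Rightarrow> real" and R h :: real
  assumes R: "R > 0" and h: "h \<ge> 0"
    and dx: "\<And>t. t > 0 \<Longrightarrow> (x has_real_derivative x' t) (at t)"
    and dy: "\<And>t. t > 0 \<Longrightarrow> (y has_real_derivative y' t) (at t)"
    and dx': "\<And>t. t > 0 \<Longrightarrow> (x' has_real_derivative x'' t) (at t)"
    and dy': "\<And>t. t > 0 \<Longrightarrow> (y' has_real_derivative y'' t) (at t)"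
    and y_pos: "\<And>t. t > 0 \<Longrightarrow> y t > 0"
    and regular: "\<And>t. t > 0 \<Longrightarrow> (x' t)\<^sup>2 + (y' t)\<^sup>2 > 0"
    and disc: "\<And>t. t > 0 \<Longrightarrow> (x t)\<^sup>2 + (y t)\<^sup>2 \<le> R\<^sup>2"
    and curv: "\<And>t. t > 0 \<Longrightarrow> \<bar>revolution_curv_sum (y t) (x' t) (y' t) (x'' t) (y'' t)\<bar> \<le> 2 * h"
    and length: "\<And>B. \<exists>T \<ge> 1. integral {1..T} (\<lambda>t. sqrt ((x' t)\<^sup>2 + (y' t)\<^sup>2)) > B"
  shows "1 \<le> h * R"
proof (rule ccontr)
  assume "\<not> 1 \<le> h * R"
  define \<mu> where "\<mu> = (1 - h * R) / (h + 1)"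
  have \<mu>: "\<mu> > 0" "2 * h * \<mu> \<le> 4 * (1 - h * R)"
  proof -
    show "\<mu> > 0" using h \<open>\<not> 1 \<le> h * R\<close> by (simp add: \<mu>_def)
    have "h / (h + 1) * (1 - h * R) \<le> 1 * (1 - h * R)"
      using h \<open>\<not> 1 \<le> h * R\<close> by (intro mult_right_mono) auto
    then show "2 * h * \<mu> \<le> 4 * (1 - h * R)" using \<open>\<not> 1 \<le> h * R\<close> by (simp add: \<mu>_def)
  qed
  define \<sigma> where "\<sigma> t = sqrt ((x' t)\<^sup>2 + (y' t)\<^sup>2)" for t
  define Z where "Z t = y t * (2 * x t * x' t + 2 * y t * y' t + \<mu> * y' t) / \<sigma> t" for t
  have \<sigma>: "\<sigma> t > 0" "(\<sigma> t)\<^sup>2 = (x' t)\<^sup>2 + (y' t)\<^sup>2" if "t > 0" for t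
    using regular[OF that] by (simp_all add: \<sigma>_def)
  have Z_deriv: "\<exists>D. (Z has_real_derivative D) (at t) \<and> \<mu> * \<sigma> t \<le> D" if t: "t > 0" for t
  proof -
    have "(\<sigma> has_real_derivative (x' t * x'' t + y' t * y'' t) / \<sigma> t) (at t)"
      unfolding \<sigma>_def[abs_def] using \<sigma>[OF t] regular[OF t]
      by (auto intro!: derivative_eq_intros dx' dy' t simp: \<sigma>_def divide_simps algebra_simps)
    then have "(Z has_real_derivative
        ((y' t * (2 * x t * x' t + 2 * y t * y' t + \<mu> * y' t) + y t * (2 * x' t * x' t + 2 * x t * x'' t
          + 2 * y' t * y' t + 2 * y t * y'' t + \<mu> * y'' t)) * \<sigma> t
        - y t * (2 * x t * x' t + 2 * y t * y' t + \<mu> * y' t) * ((x' t * x'' t + y' t * y'' t) / \<sigma> t))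
        / (\<sigma> t * \<sigma> t)) (at t)"
      unfolding Z_def[abs_def] using \<sigma>[OF t]
      by (auto intro!: derivative_eq_intros dx dy dx' dy' t simp: algebra_simps)
    then show ?thesis
      unfolding barrier_deriv_eq[OF \<sigma>[OF t] y_pos[OF t]]
      using barrier_deriv_ge[OF \<sigma>[OF t] y_pos[OF t] disc[OF t] R _ h less_imp_le[OF \<mu>(1)] \<mu>(2)]
        curv[OF t] by (auto simp: revolution_curv_sum_def \<sigma>_def)
  qed
  have Z_bound: "\<bar>Z t\<bar> \<le> R * (2 * R + \<mu>)" if "t > 0" for t
    unfolding Z_def using abs_barrier_le[OF \<sigma>[OF that] disc[OF that] R less_imp_le[OF \<mu>(1)]] .
  from Z_deriv obtain D where D: "\<And>t. t > 0 \<Longrightarrow> (Z has_real_derivative D t) (at t) \<and> \<mu> * \<sigma> t \<le> D t"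
    by metis
  obtain T where T: "T \<ge> 1" "integral {1..T} \<sigma> > 2 * R * (2 * R + \<mu>) / \<mu>"
    using length unfolding \<sigma>_def[abs_def] by blast
  have "continuous_on {1..T} \<sigma>"
    unfolding \<sigma>_def[abs_def] using DERIV_isCont[OF dx'] DERIV_isCont[OF dy']
    by (auto intro!: continuous_intros continuous_at_imp_continuous_on)
  then have "(\<lambda>t. \<mu> * \<sigma> t) integrable_on {1..T}"
    by (intro integrable_continuous_real continuous_intros)
  then have "integral {1..T} (\<lambda>t. \<mu> * \<sigma> t) \<le> Z T - Z 1"
    using D T(1) by (intro integral_le_diff_of_deriv_ge[where D = D]) auto
  also have "\<dots> \<le> 2 * (R * (2 * R + \<mu>))"
    using Z_bound[of T] Z_bound[of 1] T(1) by (simp add: abs_le_iff)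
  finally have "integral {1..T} \<sigma> \<le> 2 * R * (2 * R + \<mu>) / \<mu>"
    using \<mu>(1) by (simp add: field_simps)
  with T(2) show False by simp
qed


section \<open>The profile of an end of revolution\<close>

lemma has_real_derivative_inner_diff:
  fixes f :: "real \<Rightarrow> real^3"
  assumes "(f has_vector_derivative f') (at t)"
  shows "((\<lambda>t. (f t - c) \<bullet> v) has_real_derivative f' \<bullet> v) (at t)"
proof -
  have "((\<lambda>t. f t - c) has_vector_derivative f') (at t)"
    using assms by (auto intro!: derivative_eq_intros)
  from bounded_linear.has_vector_derivative[OF bounded_linear_inner_left this, of v]
  show ?thesis by (simp add: has_real_derivative_iff_has_vector_derivative)
qed

lemma has_vector_derivative_orthogonal:
  fixes f :: "real \<Rightarrow> real^3"
  assumes "(f has_vector_derivative f') (at t)" "t > 0" "\<And>s. s > 0 \<Longrightarrow> (f s - c) \<bullet> n = 0"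
  shows "f' \<bullet> n = 0"
proof -
  have "((\<lambda>s. 0) has_real_derivative f' \<bullet> n) (at t)"
    by (rule has_field_derivative_transform_within_open[OF has_real_derivative_inner_diff[OF assms(1)],
          of "{0<..}"]) (use assms in auto)
  then show ?thesis using DERIV_const DERIV_unique by blast
qed

lemma continuous_nonzero_sign_eq:
  fixes g :: "real \<Rightarrow> real"
  assumes cont: "continuous_on {0..} g" and nonzero: "\<And>t. t \<ge> 0 \<Longrightarrow> g t \<noteq> 0" and t: "t \<ge> 0"
  shows "0 < g t \<longleftrightarrow> 0 < g 0"
proof -
  have cont_t: "continuous_on {0..t} g" using continuous_on_subset[OF cont] by auto
  have "\<not> (g 0 < 0 \<and> 0 < g t)"
  proof
    assume "g 0 < 0 \<and> 0 < g t"
    then obtain s where "0 \<le> s" "s \<le> t" "g s = 0" using IVT'[of g 0 0 t, OF _ _ t cont_t] by auto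
    with nonzero show False by auto
  qed
  moreover have "\<not> (0 < g 0 \<and> g t < 0)"
  proof
    assume "0 < g 0 \<and> g t < 0"
    then obtain s where "0 \<le> s" "s \<le> t" "g s = 0" using IVT2'[of g t 0 0, OF _ _ t cont_t] by auto
    with nonzero show False by auto
  qed
  ultimately show ?thesis using nonzero[OF t] nonzero[of 0] by linarith
qed

lemma planar_curve_side:
  fixes \<beta> :: "real \<Rightarrow> real^3"
  assumes v: "v \<bullet> v = 1" and n: "n \<bullet> n = 1" and vn: "v \<bullet> n = 0"
    and cont: "continuous_on {0..} \<beta>"
    and plane: "\<And>t. t \<ge> 0 \<Longrightarrow> (\<beta> t - a) \<bullet> n = 0"
    and off_axis: "\<And>t s. t \<ge> 0 \<Longrightarrow> \<beta> t \<noteq> a + s *\<^sub>R v"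
  obtains w where "w \<bullet> w = 1" "v \<bullet> w = 0" "\<And>z. z \<bullet> n = 0 \<Longrightarrow> z = (z \<bullet> v) *\<^sub>R v + (z \<bullet> w) *\<^sub>R w"
    "\<And>t. t \<ge> 0 \<Longrightarrow> (\<beta> t - a) \<bullet> w > 0"
proof -
  define w0 where "w0 = cross3 n v"
  have nv: "n \<bullet> v = 0" using vn by (simp add: inner_commute)
  have w0: "w0 \<bullet> w0 = 1" "v \<bullet> w0 = 0"
    using orthonormal_frame_cross3[OF n v nv] by (simp_all add: w0_def)
  note decomp = orthonormal_frame_decomp[OF v n vn, folded w0_def]
  define y0 where "y0 t = (\<beta> t - a) \<bullet> w0" for t
  have y0_nonzero: "y0 t \<noteq> 0" if "t \<ge> 0" for t
  proof
    assume "y0 t = 0"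
    then have "\<beta> t = a + ((\<beta> t - a) \<bullet> v) *\<^sub>R v"
      using decomp[OF plane[OF that]] by (simp add: y0_def algebra_simps)
    with off_axis[OF that] show False by blast
  qed
  have y0_cont: "continuous_on {0..} y0"
    unfolding y0_def by (intro continuous_intros cont)
  define w where "w = (if y0 0 > 0 then w0 else - w0)"
  show thesis
  proof
    show "w \<bullet> w = 1" "v \<bullet> w = 0" using w0 by (simp_all add: w_def)
    show "z = (z \<bullet> v) *\<^sub>R v + (z \<bullet> w) *\<^sub>R w" if "z \<bullet> n = 0" for z
      using decomp[OF that] by (simp add: w_def)
    show "(\<beta> t - a) \<bullet> w > 0" if "t \<ge> 0" for t
      using continuous_nonzero_sign_eq[OF y0_cont y0_nonzero that] y0_nonzero[OF that] y0_nonzero[of 0]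
      by (auto simp: w_def y0_def)
  qed
qed

lemma revolution_end_data_curve:
  assumes "revolution_end_data a v n \<beta>"
  obtains \<beta>' \<beta>'' where "\<And>t. t > 0 \<Longrightarrow> (\<beta> has_vector_derivative \<beta>' t) (at t)"
    "\<And>t. t > 0 \<Longrightarrow> (\<beta>' has_vector_derivative \<beta>'' t) (at t)"
    "continuous_on {0..} \<beta>" "\<And>t. t \<ge> 0 \<Longrightarrow> \<beta>' t \<noteq> 0"
    "\<And>B. \<exists>T \<ge> 1. integral {1..T} (\<lambda>t. norm (\<beta>' t)) > B"
proof -
  define \<beta>' where "\<beta>' = (\<lambda>t. vector_derivative \<beta> (at t within {0..}))"
  define \<beta>'' where "\<beta>'' = (\<lambda>t. vector_derivative \<beta>' (at t within {0..}))"
  have smooth: "smooth_curve_on {0..} \<beta>"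
    and regular: "\<And>t. t \<ge> 0 \<Longrightarrow> \<beta>' t \<noteq> 0"
    and length: "\<And>B. \<exists>T \<ge> 0. integral {0..T} (\<lambda>t. norm (\<beta>' t)) > B"
    using assms by (simp_all add: revolution_end_data_def \<beta>'_def)
  have "\<beta>' \<in> curve_derivs {0..} \<beta>"
    unfolding \<beta>'_def by (intro curve_derivs.step curve_derivs.base)
  then have diff: "\<beta> differentiable (at t within {0..})" "\<beta>' differentiable (at t within {0..})"
    if "t \<ge> 0" for t
    using smooth curve_derivs.base that unfolding smooth_curve_on_def by auto
  have at_within: "at t within {0..} = at t" if "t > (0::real)" for t
    by (rule at_within_interior) (use that in \<open>simp add: interior_real_atLeast\<close>)
  have cont': "continuous_on {0..} \<beta>'"
    using diff(2) by (auto simp: continuous_on_eq_continuous_within intro: differentiable_imp_continuous_within)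
  have int: "(\<lambda>t. norm (\<beta>' t)) integrable_on {a..b}" if "a \<ge> 0" for a b
    by (rule integrable_continuous_real, intro continuous_intros continuous_on_subset[OF cont']) (use that in auto)
  show thesis
  proof
    show "(\<beta> has_vector_derivative \<beta>' t) (at t)" "(\<beta>' has_vector_derivative \<beta>'' t) (at t)" if "t > 0" for t
      using diff[of t] that at_within[OF that] by (simp_all add: \<beta>'_def \<beta>''_def vector_derivative_works)
    show "continuous_on {0..} \<beta>"
      using diff(1) by (auto simp: continuous_on_eq_continuous_within intro: differentiable_imp_continuous_within)
    show "\<beta>' t \<noteq> 0" if "t \<ge> 0" for t using regular that .
    show "\<exists>T \<ge> 1. integral {1..T} (\<lambda>t. norm (\<beta>' t)) > B" for B
    proof -
      define C where "C = integral {0..1} (\<lambda>t. norm (\<beta>' t))"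
      obtain T where T: "T \<ge> 0" "integral {0..T} (\<lambda>t. norm (\<beta>' t)) > max B 0 + C"
        using length by blast
      have "T \<ge> 1"
      proof (rule ccontr)
        assume "\<not> T \<ge> 1"
        then have "integral {0..T} (\<lambda>t. norm (\<beta>' t)) \<le> C"
          unfolding C_def by (intro integral_subset_le int) auto
        with T show False by simp
      qed
      moreover have "C + integral {1..T} (\<lambda>t. norm (\<beta>' t)) = integral {0..T} (\<lambda>t. norm (\<beta>' t))"
        unfolding C_def by (rule Henstock_Kurzweil_Integration.integral_combine) (use \<open>T \<ge> 1\<close> int in auto)
      ultimately show ?thesis using T by auto
    qed
  qed
qed

lemma orbit_in_ball_bound:
  fixes a c v w :: "real^3"
  assumes v: "v \<bullet> v = 1" and w: "w \<bullet> w = 1" and vw: "v \<bullet> w = 0"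
    and plus: "a + x *\<^sub>R v + y *\<^sub>R w \<in> ball c R" and minus: "a + x *\<^sub>R v - y *\<^sub>R w \<in> ball c R"
  shows "(x + (a - c) \<bullet> v)\<^sup>2 + y\<^sup>2 \<le> R\<^sup>2"
proof -
  define e where "e = a - c + x *\<^sub>R v"
  have "norm (e + y *\<^sub>R w) < R" "norm (e - y *\<^sub>R w) < R"
    using plus minus by (simp_all add: e_def dist_norm norm_minus_commute algebra_simps)
  then have "(norm (e + y *\<^sub>R w))\<^sup>2 < R\<^sup>2" "(norm (e - y *\<^sub>R w))\<^sup>2 < R\<^sup>2"
    by (simp_all add: power_strict_mono)
  moreover have "(norm (e + y *\<^sub>R w))\<^sup>2 = e \<bullet> e + y\<^sup>2 + 2 * y * (e \<bullet> w)"
    "(norm (e - y *\<^sub>R w))\<^sup>2 = e \<bullet> e + y\<^sup>2 - 2 * y * (e \<bullet> w)"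
    unfolding power2_norm_eq_inner using w by (simp_all add: inner_add_left inner_add_right inner_diff_left
        inner_diff_right inner_commute power2_eq_square)
  ultimately have "e \<bullet> e + y\<^sup>2 < R\<^sup>2" by linarith
  moreover have "(e \<bullet> v)\<^sup>2 \<le> e \<bullet> e" using Cauchy_Schwarz_ineq[of e v] v by simp
  moreover have "e \<bullet> v = x + (a - c) \<bullet> v" using v by (simp add: e_def inner_add_left)
  ultimately show ?thesis by simp
qed


lemma revolution_profile_mean_curv_bound:
  fixes \<beta> \<beta>' \<beta>'' :: "real \<Rightarrow> real^3"
  assumes R: "R > 0" and h: "h \<ge> 0"
    and v: "v \<bullet> v = 1" and w: "w \<bullet> w = 1" and vw: "v \<bullet> w = 0"
    and decomp: "\<And>z. z \<bullet> n = 0 \<Longrightarrow> z = (z \<bullet> v) *\<^sub>R v + (z \<bullet> w) *\<^sub>R w"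
    and plane: "\<And>t. t \<ge> 0 \<Longrightarrow> (\<beta> t - a) \<bullet> n = 0"
    and side: "\<And>t. t \<ge> 0 \<Longrightarrow> (\<beta> t - a) \<bullet> w > 0"
    and d0: "\<And>t. t > 0 \<Longrightarrow> (\<beta> has_vector_derivative \<beta>' t) (at t)"
    and d1: "\<And>t. t > 0 \<Longrightarrow> (\<beta>' has_vector_derivative \<beta>'' t) (at t)"
    and regular: "\<And>t. t \<ge> 0 \<Longrightarrow> \<beta>' t \<noteq> 0"
    and length: "\<And>B. \<exists>T \<ge> 1. integral {1..T} (\<lambda>t. norm (\<beta>' t)) > B"
    and in_ball: "\<And>t \<theta>. t > 0 \<Longrightarrow> revolution_map a v \<beta> (t, \<theta>) \<in> ball c R"
    and curv: "\<And>t. t > 0 \<Longrightarrow> norm (mean_curv_of_partials (\<beta>' t) (cross3 v (\<beta> t - a))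
       (\<beta>'' t) (cross3 v (\<beta>' t)) (((\<beta> t - a) \<bullet> v) *\<^sub>R v - (\<beta> t - a))) \<le> h"
  shows "1 \<le> h * R"
proof -
  have plane': "\<beta>' t \<bullet> n = 0" if "t > 0" for t
    by (rule has_vector_derivative_orthogonal[OF d0[OF that] that, of a]) (use plane in auto)
  have plane'': "\<beta>'' t \<bullet> n = 0" if "t > 0" for t
    by (rule has_vector_derivative_orthogonal[OF d1[OF that] that, of 0]) (use plane' in auto)
  define x where "x t = (\<beta> t - c) \<bullet> v" for t
  define y where "y t = (\<beta> t - a) \<bullet> w" for t
  define x' where "x' t = \<beta>' t \<bullet> v" for t
  define y' where "y' t = \<beta>' t \<bullet> w" for t
  define x'' where "x'' t = \<beta>'' t \<bullet> v" for t
  define y'' where "y'' t = \<beta>'' t \<bullet> w" for t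
  have \<beta>: "\<beta> t - a = (x t + (c - a) \<bullet> v) *\<^sub>R v + y t *\<^sub>R w" if "t \<ge> 0" for t
  proof -
    have "(\<beta> t - a) \<bullet> v = x t + (c - a) \<bullet> v" by (simp add: x_def inner_diff_left)
    with decomp[OF plane[OF that]] show ?thesis by (simp only: y_def[symmetric])
  qed
  have \<beta>': "\<beta>' t = x' t *\<^sub>R v + y' t *\<^sub>R w" and \<beta>'': "\<beta>'' t = x'' t *\<^sub>R v + y'' t *\<^sub>R w"
    if "t > 0" for t
    using decomp[OF plane'[OF that]] decomp[OF plane''[OF that]] by (simp_all add: x'_def y'_def x''_def y''_def)
  have norm_\<beta>': "norm (\<beta>' t) = sqrt ((x' t)\<^sup>2 + (y' t)\<^sup>2)" if "t > 0" for t
    using v w vw by (simp add: \<beta>'[OF that] norm_eq_sqrt_inner inner_add_left inner_add_right inner_commute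
        power2_eq_square)
  have y_pos: "y t > 0" if "t > 0" for t using side that by (simp add: y_def)
  have regular': "(x' t)\<^sup>2 + (y' t)\<^sup>2 > 0" if "t > 0" for t
  proof -
    have "0 < norm (\<beta>' t)" using regular[of t] that by simp
    then show ?thesis using norm_\<beta>'[OF that] by simp
  qed
  show ?thesis
  proof (rule profile_mean_curv_bound[OF R h])
    show "(x has_real_derivative x' t) (at t)" "(y has_real_derivative y' t) (at t)" if "t > 0" for t
      unfolding x_def[abs_def] y_def[abs_def] x'_def y'_def
      by (rule has_real_derivative_inner_diff[OF d0[OF that]])+
    show "(x' has_real_derivative x'' t) (at t)" "(y' has_real_derivative y'' t) (at t)" if "t > 0" for t
      using has_real_derivative_inner_diff[OF d1[OF that], of 0]
      by (simp_all add: x'_def[abs_def] y'_def[abs_def] x''_def y''_def)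
    show "y t > 0" if "t > 0" for t using that by (rule y_pos)
    show "(x' t)\<^sup>2 + (y' t)\<^sup>2 > 0" if "t > 0" for t using that by (rule regular')
    show "(x t)\<^sup>2 + (y t)\<^sup>2 \<le> R\<^sup>2" if "t > 0" for t
    proof -
      have "\<beta> t = a + (\<beta> t - a)" by simp
      also have "\<dots> = a + (x t + (c - a) \<bullet> v) *\<^sub>R v + y t *\<^sub>R w" using \<beta>[of t] that by (simp add: add.assoc)
      finally have "rot_about a v \<theta> (a + (x t + (c - a) \<bullet> v) *\<^sub>R v + y t *\<^sub>R w) \<in> ball c R" for \<theta>
        using in_ball[OF that, of \<theta>] by (simp only: revolution_map_def prod.case)
      from this[of 0] this[of pi] have "((x t + (c - a) \<bullet> v) + (a - c) \<bullet> v)\<^sup>2 + (y t)\<^sup>2 \<le> R\<^sup>2"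
        unfolding rot_about_zero_pi[OF v vw] by (rule orbit_in_ball_bound[OF v w vw])
      then show ?thesis by (simp add: inner_diff_left inner_commute algebra_simps)
    qed
    show "\<bar>revolution_curv_sum (y t) (x' t) (y' t) (x'' t) (y'' t)\<bar> \<le> 2 * h" if "t > 0" for t
      using curv[OF that] norm_mean_curv_revolution[OF v w vw y_pos[OF that] regular'[OF that],
          where x = "x t + (c - a) \<bullet> v" and x'' = "x'' t" and y'' = "y'' t"] that
      by (simp add: \<beta>[of t] \<beta>'[OF that] \<beta>''[OF that])
    show "\<exists>T \<ge> 1. integral {1..T} (\<lambda>t. sqrt ((x' t)\<^sup>2 + (y' t)\<^sup>2)) > B" for B
    proof -
      obtain T where T: "T \<ge> 1" "integral {1..T} (\<lambda>t. norm (\<beta>' t)) > B" using length by blast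
      moreover have "integral {1..T} (\<lambda>t. norm (\<beta>' t)) = integral {1..T} (\<lambda>t. sqrt ((x' t)\<^sup>2 + (y' t)\<^sup>2))"
        by (rule integral_cong) (simp add: norm_\<beta>')
      ultimately show ?thesis by auto
    qed
  qed
qed

lemma revolution_end_mean_curv_bound:
  fixes M :: "'a set" and F :: "'a \<Rightarrow> real^3"
  assumes R: "R > 0" and imm: "surface_immersion M A F" and in_ball: "F ` M \<subseteq> ball c R"
    and end_rev: "has_revolution_end M A F" and h: "h \<ge> 0"
    and H: "\<And>U q u. (U, q) \<in> A \<Longrightarrow> u \<in> U \<Longrightarrow> norm (mean_curv_vec (F \<circ> q) u) \<le> h"
  shows "1 \<le> h * R"
proof -
  obtain a v n \<beta> K and p :: "real \<times> real \<Rightarrow> 'a" where data: "revolution_end_data a v n \<beta>"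
    and per: "\<And>t \<theta>. p (t, \<theta> + 2 * pi) = p (t, \<theta>)"
    and inj: "inj_on p {z. fst z \<ge> 0 \<and> 0 \<le> snd z \<and> snd z < 2 * pi}"
    and comp: "\<forall>V. open V \<and> V \<subseteq> {z. fst z > 0} \<and> inj_on p V \<longrightarrow>
             (\<forall>P \<in> A. compatible_params (V, p) P \<and> compatible_params P (V, p))"
    and component: "p ` {z. fst z > 0} \<in> connected_components_of (subtopology (surf_top M A) (M - K))"
    and Fp: "\<And>z. fst z \<ge> 0 \<Longrightarrow> F (p z) = revolution_map a v \<beta> z"
    using end_rev unfolding has_revolution_end_def by (elim exE conjE) (rule that; blast)
  have pM: "p z \<in> M" if "fst z > 0" for z
    using connected_components_of_subset[OF component] that by auto
  have v: "v \<bullet> v = 1" and n: "n \<bullet> n = 1" and vn: "v \<bullet> n = 0"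
    and plane: "\<And>t. t \<ge> 0 \<Longrightarrow> (\<beta> t - a) \<bullet> n = 0"
    and off_axis: "\<And>t s. t \<ge> 0 \<Longrightarrow> \<beta> t \<noteq> a + s *\<^sub>R v"
    using data by (auto simp: revolution_end_data_def power2_norm_eq_inner[symmetric])
  obtain \<beta>' \<beta>'' where d0: "\<And>t. t > 0 \<Longrightarrow> (\<beta> has_vector_derivative \<beta>' t) (at t)"
    and d1: "\<And>t. t > 0 \<Longrightarrow> (\<beta>' has_vector_derivative \<beta>'' t) (at t)"
    and curve: "continuous_on {0..} \<beta>" "\<And>t. t \<ge> 0 \<Longrightarrow> \<beta>' t \<noteq> 0"
      "\<And>B. \<exists>T \<ge> 1. integral {1..T} (\<lambda>t. norm (\<beta>' t)) > B"
    using revolution_end_data_curve[OF data] by blast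
  obtain w where frame: "w \<bullet> w = 1" "v \<bullet> w = 0" "\<And>z. z \<bullet> n = 0 \<Longrightarrow> z = (z \<bullet> v) *\<^sub>R v + (z \<bullet> w) *\<^sub>R w"
    "\<And>t. t \<ge> 0 \<Longrightarrow> (\<beta> t - a) \<bullet> w > 0"
    using planar_curve_side[OF v n vn curve(1) plane off_axis] by blast
  show ?thesis
  proof (rule revolution_profile_mean_curv_bound[OF R h v frame(1,2,3) plane frame(4) d0 d1 curve(2,3)])
    show "revolution_map a v \<beta> (t, \<theta>) \<in> ball c R" if "t > 0" for t \<theta>
      using in_ball pM[of "(t, \<theta>)"] Fp[of "(t, \<theta>)"] that by auto
    show "norm (mean_curv_of_partials (\<beta>' t) (cross3 v (\<beta> t - a)) (\<beta>'' t) (cross3 v (\<beta>' t))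
        (((\<beta> t - a) \<bullet> v) *\<^sub>R v - (\<beta> t - a))) \<le> h" if "t > 0" for t
      using revolution_end_mean_curv[OF imm pM per inj comp Fp d0 d1 that] H by metis
  qed
qed

theorem corollary9p1:
  fixes M :: "'a set"
    and A :: "((real \<times> real) set \<times> (real \<times> real \<Rightarrow> 'a)) set"
    and F :: "'a \<Rightarrow> real^3"
    and c :: "real^3" and R :: real
  assumes "R > 0"
    and "surface_immersion M A F"
    and "F ` M \<subseteq> ball c R"
    and "has_revolution_end M A F"
  shows "(SUP UPU \<in> {(U, p, u). (U, p) \<in> A \<and> u \<in> U}.
            ereal (norm (mean_curv_vec (F \<circ> fst (snd UPU)) (snd (snd UPU)))))
         \<ge> ereal (1 / R)"
proof (rule ccontr)
  let ?S = "SUP UPU \<in> {(U, p, u). (U, p) \<in> A \<and> u \<in> U}.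
      ereal (norm (mean_curv_vec (F \<circ> fst (snd UPU)) (snd (snd UPU))))"
  assume "\<not> ?S \<ge> ereal (1 / R)"
  then have S: "?S < ereal (1 / R)" by simp
  define h where "h = max 0 (real_of_ereal ?S)"
  have "?S \<le> ereal h" and "h < 1 / R"
    using S \<open>R > 0\<close> by (cases ?S; simp add: h_def)+
  have H: "norm (mean_curv_vec (F \<circ> q) u) \<le> h" if "(U, q) \<in> A" "u \<in> U" for U q u
  proof -
    have "ereal (norm (mean_curv_vec (F \<circ> q) u)) \<le> ?S"
      using that by (intro SUP_upper2[of "(U, q, u)"]) auto
    also have "\<dots> \<le> ereal h" by fact
    finally show ?thesis by simp
  qed
  have "h \<ge> 0" by (simp add: h_def)
  from revolution_end_mean_curv_bound[OF assms this H] have "1 \<le> h * R" .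
  with \<open>h < 1 / R\<close> \<open>R > 0\<close> show False by (simp add: field_simps)
qed

end
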